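(* Let $1<p<\infty$ and let $u,v$ be weights. Suppose that for each $A\subseteq\{a_1,\dots,a_k\}$ there is a constant $C$ with $$\Vert u\,w^A\,\widetilde S_n^A([v\,w^A]^{-1}f)\Vert_{L^p(d\mu^A)}\le C\Vert f\Vert_{L^p(d\mu^A)}\quad\text{for all }n\ge0,\ f\in L^p(d\mu^A).$$ Then there exists a constant $C$ such that $\Vert u\,T_n(v^{-1}f)\Vert_{L^p(d\mu)}\le C\Vert f\Vert_{L^p(d\mu)}$ for all $n\ge0$ and $f\in L^p(d\mu)$.
   Context: Let $\mu$ be a positive Borel measure on $\mathbb R$ with infinitely many points of increase and all moments finite. Let $a_1,\dots,a_k\in\mathbb R$ be distinct with $\mu(\{a_i\})=0$, $M_i>0$, $\nu=\mu+\sum_{i=1}^kM_i\delta_{a_i}$. $L_n(x,y)=\sum_{j=0}^nP_j(x)P_j(y)$ with $(P_j)$ the orthonormal polynomials for $\nu$, and $T_nf(x)=\int L_n(x,y)f(y)\,d\mu(y)$. For $A\subseteq\{a_1,\dots,a_k\}$: $d\mu^A(x)=\prod_{a_i\in A}(x-a_i)^2\,d\mu(x)$; $\widetilde S_n^A$ is the $n$-th partial sum operator of the orthonormal polynomial expansion with respect to $\mu^A$, i.e. $\widetilde S_n^Ag(x)=\int K_n^A(x,y)g(y)\,d\mu^A(y)$ with $K_n^A$ the $n$-th kernel of $\mu^A$ (and $\widetilde S_m^A=0$ for $m<0$); $w^A(x)=\prod_{a_i\in A}|x-a_i|^{1-2/p}$. A weight is a non-negative measurable function. *)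

theory Defs
  imports "HOL-Analysis.Analysis" "HOL-Computational_Algebra.Polynomial"
begin

definition point_of_increase :: "real measure \<Rightarrow> real \<Rightarrow> bool" where
  "point_of_increase \<mu> x \<longleftrightarrow> (\<forall>e>0. emeasure \<mu> {x - e<..<x + e} > 0)"

definition nu_measure :: "real measure \<Rightarrow> (nat \<Rightarrow> real) \<Rightarrow> (nat \<Rightarrow> real) \<Rightarrow> nat \<Rightarrow> real measure" where
  "nu_measure \<mu> a M k = measure_of UNIV (sets borel)
     (\<lambda>S. emeasure \<mu> S + (\<Sum>i<k. ennreal (M i) * indicator S (a i)))"

definition muA :: "real measure \<Rightarrow> (nat \<Rightarrow> real) \<Rightarrow> nat set \<Rightarrow> real measure" where
  "muA \<mu> a A = density \<mu> (\<lambda>x. ennreal (\<Prod>i\<in>A. (x - a i)^2))"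

definition orthonormal_polys :: "real measure \<Rightarrow> (nat \<Rightarrow> real poly) \<Rightarrow> bool" where
  "orthonormal_polys N P \<longleftrightarrow>
     (\<forall>j. degree (P j) = j \<and> lead_coeff (P j) > 0) \<and>
     (\<forall>i j. (\<integral>x. poly (P i) x * poly (P j) x \<partial>N) = (if i = j then 1 else 0))"

definition onpolys :: "real measure \<Rightarrow> nat \<Rightarrow> real poly" where
  "onpolys N = (SOME P. orthonormal_polys N P)"

definition opkernel :: "real measure \<Rightarrow> nat \<Rightarrow> real \<Rightarrow> real \<Rightarrow> real" where
  "opkernel N n x y = (\<Sum>j\<le>n. poly (onpolys N j) x * poly (onpolys N j) y)"

definition Lp_norm :: "real measure \<Rightarrow> real \<Rightarrow> (real \<Rightarrow> real) \<Rightarrow> ennreal" where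
  "Lp_norm N p f =
     (let I = (\<integral>\<^sup>+ x. ennreal (\<bar>f x\<bar> powr p) \<partial>N)
      in if I = \<infinity> then \<infinity> else ennreal (enn2real I powr (1 / p)))"

definition in_Lp :: "real measure \<Rightarrow> real \<Rightarrow> (real \<Rightarrow> real) \<Rightarrow> bool" where
  "in_Lp N p f \<longleftrightarrow> f \<in> borel_measurable N \<and> (\<integral>\<^sup>+ x. ennreal (\<bar>f x\<bar> powr p) \<partial>N) < \<infinity>"

definition T_op :: "real measure \<Rightarrow> (nat \<Rightarrow> real) \<Rightarrow> (nat \<Rightarrow> real) \<Rightarrow> nat \<Rightarrow> nat
    \<Rightarrow> (real \<Rightarrow> real) \<Rightarrow> real \<Rightarrow> real" where
  "T_op \<mu> a M k n f x = (\<integral>y. opkernel (nu_measure \<mu> a M k) n x y * f y \<partial>\<mu>)"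

definition S_opA :: "real measure \<Rightarrow> (nat \<Rightarrow> real) \<Rightarrow> nat set \<Rightarrow> nat
    \<Rightarrow> (real \<Rightarrow> real) \<Rightarrow> real \<Rightarrow> real" where
  "S_opA \<mu> a A n g x = (\<integral>y. opkernel (muA \<mu> a A) n x y * g y \<partial>(muA \<mu> a A))"

definition wA :: "(nat \<Rightarrow> real) \<Rightarrow> nat set \<Rightarrow> real \<Rightarrow> real \<Rightarrow> real" where
  "wA a A p x = (\<Prod>i\<in>A. \<bar>x - a i\<bar> powr (1 - 2 / p))"

end

theory Submission
  imports Defs
begin

text \<open>
  Induction on the number of point masses. Put \<open>\<rho> = \<mu> + \<Sum>\<^bsub>i<k\<^esub> M\<^sub>i \<delta>\<^bsub>a\<^sub>i\<^esub>\<close> and \<open>b = a\<^sub>k\<close>.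
  Adding the mass \<open>M\<^sub>k\<close> at \<open>b\<close> leaves the inner product with polynomials vanishing at \<open>b\<close>
  unchanged, so the \<open>n\<close>-th partial sum moves only along the kernel \<open>K\<^sub>n(x, b)\<close>. This gives the
  Christoffel-type identity
  \<open>T\<^sub>n g = \<gamma> T\<^sup>\<rho>\<^sub>n g + (1 - \<gamma>) (x - b) T'\<^bsub>n-1\<^esub> (g / (x - b))\<close> with
  \<open>\<gamma> = 1 / (1 + M\<^sub>k K\<^sup>\<rho>\<^sub>n(b, b)) \<in> (0, 1]\<close>, where \<open>T'\<close> is the operator for \<open>(x - b)\<^sup>2 \<mu>\<close>
  with the masses \<open>M\<^sub>i (a\<^sub>i - b)\<^sup>2\<close>, \<open>i < k\<close>. The first term is bounded by induction. For the
  second, multiplication by \<open>w = |x - b|\<^bsup>1-2/p\<^esup>\<close> turns the \<open>L\<^sup>p((x - b)\<^sup>2 \<mu>)\<close> norms of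
  \<open>u w F\<close> and \<open>f w / (x - b)\<close> into the \<open>L\<^sup>p(\<mu>)\<close> norms of \<open>u (x - b) F\<close> and \<open>f\<close>, so the
  induction hypothesis for \<open>(x - b)\<^sup>2 \<mu>\<close> with weights \<open>u w\<close>, \<open>v w\<close> applies; its assumptions
  are among the given ones because \<open>((x - b)\<^sup>2 \<mu>)\<^sup>A = \<mu>\<^bsup>A \<union> {b}\<^esup>\<close>.
\<close>

section \<open>Polynomial moments and the polynomial inner product\<close>

definition has_moments :: "real measure \<Rightarrow> (real \<Rightarrow> real) \<Rightarrow> bool" where
  "has_moments N h \<longleftrightarrow> (\<forall>j::nat. integrable N (\<lambda>x. x ^ j * h x))"

lemma integrable_poly_mult:
  assumes "has_moments N h"
  shows "integrable N (\<lambda>x. poly q x * h x)"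
proof -
  have "(\<lambda>x. poly q x * h x) = (\<lambda>x. \<Sum>i\<le>degree q. coeff q i * (x ^ i * h x))"
    by (auto simp: poly_altdef sum_distrib_right mult.assoc)
  then show ?thesis
    using assms unfolding has_moments_def by (auto intro!: integrable_sum)
qed

lemma has_moments_poly_mult:
  assumes "has_moments N h"
  shows "has_moments N (\<lambda>x. poly r x * h x)"
  unfolding has_moments_def
proof
  fix j
  show "integrable N (\<lambda>x. x ^ j * (poly r x * h x))"
    using integrable_poly_mult[OF assms, of "monom 1 j * r"] by (simp add: poly_monom mult.assoc)
qed

lemma has_moments_poly:
  "has_moments N (\<lambda>_. 1) \<Longrightarrow> has_moments N (poly q)"
  using has_moments_poly_mult[of N "\<lambda>_. 1" q] by simp

lemma integral_poly_sum_mult: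
  assumes "has_moments N h"
  shows "(\<integral>x. poly (\<Sum>j\<in>S. f j) x * h x \<partial>N) = (\<Sum>j\<in>S. \<integral>x. poly (f j) x * h x \<partial>N)"
proof (cases "finite S")
  case True
  have "(\<lambda>x. poly (\<Sum>j\<in>S. f j) x * h x) = (\<lambda>x. \<Sum>j\<in>S. poly (f j) x * h x)"
    by (auto simp: poly_sum sum_distrib_right)
  with True show ?thesis
    using integrable_poly_mult[OF assms] by (simp add: integral_sum)
qed simp

lemma borel_measurable_poly [measurable]: "poly (p :: real poly) \<in> borel_measurable borel"
  by (intro borel_measurable_continuous_onI continuous_on_poly continuous_on_id)

definition poly_inner :: "real measure \<Rightarrow> real poly \<Rightarrow> real poly \<Rightarrow> real" where
  "poly_inner N p q = (\<integral>x. poly p x * poly q x \<partial>N)"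

lemma poly_inner_commute: "poly_inner N p q = poly_inner N q p"
  unfolding poly_inner_def by (simp add: mult.commute)

lemma poly_inner_smult_left: "poly_inner N (smult c p) q = c * poly_inner N p q"
  unfolding poly_inner_def by (simp add: mult.assoc)

lemma poly_inner_smult_right: "poly_inner N p (smult c q) = c * poly_inner N p q"
  using poly_inner_smult_left poly_inner_commute by metis

context
  fixes N :: "real measure"
  assumes moments: "has_moments N (\<lambda>_. 1)"
begin

lemma poly_inner_add_left: "poly_inner N (p + q) r = poly_inner N p r + poly_inner N q r"
  using integrable_poly_mult[OF has_moments_poly[OF moments], of p r]
    integrable_poly_mult[OF has_moments_poly[OF moments], of q r]
  by (simp add: poly_inner_def distrib_right)

lemma poly_inner_diff_left: "poly_inner N (p - q) r = poly_inner N p r - poly_inner N q r"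
  using integrable_poly_mult[OF has_moments_poly[OF moments], of p r]
    integrable_poly_mult[OF has_moments_poly[OF moments], of q r]
  by (simp add: poly_inner_def left_diff_distrib)

lemma poly_inner_sum_left: "poly_inner N (\<Sum>j\<in>S. f j) r = (\<Sum>j\<in>S. poly_inner N (f j) r)"
  unfolding poly_inner_def by (rule integral_poly_sum_mult[OF has_moments_poly[OF moments]])

lemma poly_inner_add_right: "poly_inner N r (p + q) = poly_inner N r p + poly_inner N r q"
  using poly_inner_add_left poly_inner_commute by metis

lemma poly_inner_diff_right: "poly_inner N r (p - q) = poly_inner N r p - poly_inner N r q"
  using poly_inner_diff_left poly_inner_commute by metis

lemma poly_inner_sum_right: "poly_inner N r (\<Sum>j\<in>S. f j) = (\<Sum>j\<in>S. poly_inner N r (f j))"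
  using poly_inner_sum_left[of f S r] poly_inner_commute by (metis (no_types, lifting) sum.cong)

end

definition poly_inner_pos :: "real measure \<Rightarrow> bool" where
  "poly_inner_pos N \<longleftrightarrow> (\<forall>q. q \<noteq> 0 \<longrightarrow> poly_inner N q q > 0)"

definition op_measure :: "real measure \<Rightarrow> bool" where
  "op_measure N \<longleftrightarrow> sets N = sets borel \<and> has_moments N (\<lambda>_. 1) \<and> poly_inner_pos N"

lemma op_measureD:
  assumes "op_measure N"
  shows "sets N = sets borel" "has_moments N (\<lambda>_. 1)" "poly_inner_pos N"
  using assms unfolding op_measure_def by auto

lemma op_measure_if_infinite_points_of_increase:
  assumes sets: "sets \<mu> = sets borel" and moments: "has_moments \<mu> (\<lambda>_. 1)"
    and incr: "infinite {x. point_of_increase \<mu> x}"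
  shows "op_measure \<mu>"
  unfolding op_measure_def poly_inner_pos_def
proof (intro conjI allI impI sets moments)
  fix q :: "real poly"
  assume "q \<noteq> 0"
  let ?S = "{x. poly q x \<noteq> 0}"
  have "finite {x. poly q x = 0}"
    using poly_roots_finite[OF \<open>q \<noteq> 0\<close>] .
  then obtain x0 where x0: "point_of_increase \<mu> x0" "poly q x0 \<noteq> 0"
    using incr by (metis (mono_tags, lifting) infinite_super mem_Collect_eq subsetI)
  have "open ?S"
    by (intro open_Collect_neq continuous_intros)
  then obtain e where e: "e > 0" "ball x0 e \<subseteq> ?S"
    using x0(2) by (auto simp: open_contains_ball)
  have S: "?S \<in> sets \<mu>"
    using \<open>open ?S\<close> by (simp add: sets borel_open)
  have "emeasure \<mu> {x0 - e<..<x0 + e} > 0"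
    using x0(1) e(1) unfolding point_of_increase_def by blast
  also have "\<dots> \<le> emeasure \<mu> ?S"
    using e(2) S by (intro emeasure_mono) (auto simp: ball_eq_greaterThanLessThan)
  finally have "\<not> (AE x in \<mu>. poly q x * poly q x = 0)"
    using S by (subst AE_iff_measurable[OF _ refl]) (auto simp: sets_eq_imp_space_eq[OF sets])
  moreover have "integrable \<mu> (\<lambda>x. poly q x * poly q x)"
    by (rule integrable_poly_mult[OF has_moments_poly[OF moments]])
  ultimately show "poly_inner \<mu> q q > 0"
    unfolding poly_inner_def by (simp add: integral_nonneg_eq_0_iff_AE less_le)
qed

section \<open>Orthonormal polynomials\<close>

definition orthonormal_list :: "real measure \<Rightarrow> real poly list \<Rightarrow> bool" where
  "orthonormal_list N ps \<longleftrightarrow>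
     (\<forall>j<length ps. degree (ps!j) = j \<and> lead_coeff (ps!j) > 0) \<and>
     (\<forall>i<length ps. \<forall>j<length ps. poly_inner N (ps!i) (ps!j) = (if i = j then 1 else 0))"

lemma gram_schmidt_residual:
  assumes moments: "has_moments N (\<lambda>_. 1)" and ps: "orthonormal_list N ps"
  defines "n \<equiv> length ps"
  obtains q where "degree q = n" "lead_coeff q = 1" "\<And>i. i < n \<Longrightarrow> poly_inner N q (ps!i) = 0"
proof
  define c where "c j = poly_inner N (monom 1 n) (ps!j)" for j
  define s where "s = (\<Sum>j<n. smult (c j) (ps!j))"
  have "degree s < n \<or> s = 0"
  proof (cases n)
    case (Suc m)
    have "degree s \<le> m"
      unfolding s_def
      by (rule degree_sum_le) (use ps Suc in \<open>auto simp: orthonormal_list_def n_def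
          intro: order.trans[OF degree_smult_le]\<close>)
    with Suc show ?thesis by auto
  qed (simp add: s_def)
  then have coeff_n: "coeff (monom 1 n - s) n = 1"
    by (auto simp: coeff_eq_0)
  moreover have "degree (monom 1 n - s) \<le> n"
    using \<open>degree s < n \<or> s = 0\<close> by (auto intro!: order.trans[OF degree_diff_le] simp: degree_monom_eq)
  ultimately show degree: "degree (monom 1 n - s) = n"
    by (intro antisym le_degree) simp_all
  with coeff_n show "lead_coeff (monom 1 n - s) = 1" by simp
  fix i assume "i < n"
  have "poly_inner N s (ps!i) = (\<Sum>j<n. c j * poly_inner N (ps!j) (ps!i))"
    unfolding s_def by (simp add: poly_inner_sum_left[OF moments] poly_inner_smult_left)
  also have "\<dots> = (\<Sum>j<n. if j = i then c j else 0)"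
    using ps \<open>i < n\<close> unfolding orthonormal_list_def n_def by (intro sum.cong) auto
  finally show "poly_inner N (monom 1 n - s) (ps!i) = 0"
    using \<open>i < n\<close> by (simp add: poly_inner_diff_left[OF moments] c_def)
qed

lemma orthonormal_list_snoc_ex:
  assumes moments: "has_moments N (\<lambda>_. 1)" and pos: "poly_inner_pos N"
    and ps: "orthonormal_list N ps"
  shows "\<exists>p. orthonormal_list N (ps @ [p])"
proof -
  obtain q where q: "degree q = length ps" "lead_coeff q = 1"
    "\<And>i. i < length ps \<Longrightarrow> poly_inner N q (ps!i) = 0"
    using gram_schmidt_residual[OF moments ps] by blast
  define s where "s = poly_inner N q q"
  have "q \<noteq> 0"
    using q(2) by auto
  then have "s > 0"
    using pos unfolding poly_inner_pos_def s_def by blast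
  define p where "p = smult (1 / sqrt s) q"
  have "orthonormal_list N (ps @ [p])"
    unfolding orthonormal_list_def
  proof (rule conjI; intro allI impI)
    fix j assume "j < length (ps @ [p])"
    then consider "j < length ps" | "j = length ps" by fastforce
    then show "degree ((ps @ [p]) ! j) = j \<and> lead_coeff ((ps @ [p]) ! j) > 0"
    proof cases
      case 1
      then show ?thesis using ps unfolding orthonormal_list_def by (auto simp: nth_append)
    next
      case 2
      then show ?thesis using \<open>s > 0\<close> q by (simp add: p_def)
    qed
  next
    fix i j assume "i < length (ps @ [p])" "j < length (ps @ [p])"
    have "poly_inner N p p = 1"
      using \<open>s > 0\<close> by (simp add: p_def poly_inner_smult_left poly_inner_smult_right s_def[symmetric])
    moreover have "poly_inner N p (ps!i) = 0" "poly_inner N (ps!i) p = 0" if "i < length ps" for i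
      using q(3)[OF that] by (simp_all add: p_def poly_inner_smult_left poly_inner_commute[of N "ps!i"])
    moreover have "(i < length ps \<or> i = length ps) \<and> (j < length ps \<or> j = length ps)"
      using \<open>i < length (ps @ [p])\<close> \<open>j < length (ps @ [p])\<close> by auto
    ultimately show "poly_inner N ((ps @ [p]) ! i) ((ps @ [p]) ! j) = (if i = j then 1 else 0)"
      using ps unfolding orthonormal_list_def by (auto simp: nth_append)
  qed
  then show ?thesis ..
qed

primrec gram_schmidt :: "real measure \<Rightarrow> nat \<Rightarrow> real poly list" where
  "gram_schmidt N 0 = []"
| "gram_schmidt N (Suc n) = gram_schmidt N n @ [SOME p. orthonormal_list N (gram_schmidt N n @ [p])]"

lemma length_gram_schmidt [simp]: "length (gram_schmidt N n) = n"
  by (induct n) auto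

lemma orthonormal_list_gram_schmidt:
  assumes "has_moments N (\<lambda>_. 1)" "poly_inner_pos N"
  shows "orthonormal_list N (gram_schmidt N n)"
proof (induct n)
  case 0
  then show ?case by (simp add: orthonormal_list_def)
next
  case (Suc n)
  then show ?case using someI_ex[OF orthonormal_list_snoc_ex[OF assms Suc]] by simp
qed

lemma nth_gram_schmidt_mono: "j < n \<Longrightarrow> n \<le> m \<Longrightarrow> gram_schmidt N m ! j = gram_schmidt N n ! j"
proof (induct m)
  case (Suc m)
  then show ?case by (cases "n = Suc m") (simp_all add: nth_append)
qed simp

lemma orthonormal_polys_exists:
  assumes "has_moments N (\<lambda>_. 1)" "poly_inner_pos N"
  shows "\<exists>P. orthonormal_polys N P"
proof
  define P where "P j = gram_schmidt N (Suc j) ! j" for j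
  have P_eq: "P j = gram_schmidt N m ! j" if "j < m" for j m
    unfolding P_def using nth_gram_schmidt_mono[of j "Suc j" m] that by simp
  show "orthonormal_polys N P"
    unfolding orthonormal_polys_def
  proof (rule conjI; intro allI)
    fix j
    show "degree (P j) = j \<and> 0 < lead_coeff (P j)"
      using orthonormal_list_gram_schmidt[OF assms, of "Suc j"]
      unfolding orthonormal_list_def P_def by auto
  next
    fix i j
    have "P i = gram_schmidt N (Suc (max i j)) ! i" "P j = gram_schmidt N (Suc (max i j)) ! j"
      by (rule P_eq, simp)+
    then show "(\<integral>x. poly (P i) x * poly (P j) x \<partial>N) = (if i = j then 1 else 0)"
      using orthonormal_list_gram_schmidt[OF assms, of "Suc (max i j)"]
      unfolding orthonormal_list_def poly_inner_def by (auto simp: less_Suc_eq_le)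
  qed
qed

lemma orthonormal_polys_onpolys:
  assumes "op_measure N"
  shows "orthonormal_polys N (onpolys N)"
  unfolding onpolys_def
  using orthonormal_polys_exists[OF op_measureD(2,3)[OF assms]] by (rule someI_ex)

lemma degree_orthonormal_polys: "orthonormal_polys N P \<Longrightarrow> degree (P j) = j"
  unfolding orthonormal_polys_def by auto

lemma lead_coeff_orthonormal_polys_pos: "orthonormal_polys N P \<Longrightarrow> lead_coeff (P j) > 0"
  unfolding orthonormal_polys_def by blast

lemma poly_inner_orthonormal_polys:
  "orthonormal_polys N P \<Longrightarrow> poly_inner N (P i) (P j) = (if i = j then 1 else 0)"
  unfolding orthonormal_polys_def poly_inner_def by auto

lemma orthonormal_polys_span:
  assumes P: "orthonormal_polys N P"
  shows "degree q \<le> n \<Longrightarrow> \<exists>c. q = (\<Sum>j\<le>n. smult (c j) (P j))"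
proof (induct n arbitrary: q)
  case 0
  have "coeff (P 0) 0 \<noteq> 0"
    using lead_coeff_orthonormal_polys_pos[OF P, of 0] by (simp add: degree_orthonormal_polys[OF P])
  have "q = smult (coeff q 0 / coeff (P 0) 0) (P 0)"
  proof (rule poly_eqI)
    fix i
    show "coeff q i = coeff (smult (coeff q 0 / coeff (P 0) 0) (P 0)) i"
      using 0 \<open>coeff (P 0) 0 \<noteq> 0\<close>
      by (cases i) (simp_all add: coeff_eq_0 degree_orthonormal_polys[OF P])
  qed
  then show ?case by auto
next
  case (Suc n)
  define d where "d = coeff q (Suc n) / lead_coeff (P (Suc n))"
  define r where "r = q - smult d (P (Suc n))"
  have "lead_coeff (P (Suc n)) \<noteq> 0"
    using lead_coeff_orthonormal_polys_pos[OF P] by (metis less_irrefl)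
  then have "coeff r (Suc n) = 0"
    by (simp add: r_def d_def degree_orthonormal_polys[OF P])
  moreover have "degree r \<le> Suc n"
    unfolding r_def using Suc.prems
    by (intro degree_diff_le) (auto intro: order.trans[OF degree_smult_le]
        simp: degree_orthonormal_polys[OF P])
  ultimately have "degree r \<le> n"
    by (metis le_SucE leading_coeff_0_iff degree_0 le0)
  then obtain c where c: "r = (\<Sum>j\<le>n. smult (c j) (P j))"
    using Suc.hyps by blast
  have "q = (\<Sum>j\<le>Suc n. smult ((c(Suc n := d)) j) (P j))"
    using c by (simp add: r_def sum.atMost_Suc)
  then show ?case by blast
qed

lemma orthonormal_polys_expansion:
  assumes P: "orthonormal_polys N P" and moments: "has_moments N (\<lambda>_. 1)" and q: "degree q \<le> n"
  shows "q = (\<Sum>j\<le>n. smult (poly_inner N q (P j)) (P j))"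
proof -
  obtain c where c: "q = (\<Sum>j\<le>n. smult (c j) (P j))"
    using orthonormal_polys_span[OF P q] by blast
  have "poly_inner N q (P i) = c i" if "i \<le> n" for i
  proof -
    have "poly_inner N q (P i) = (\<Sum>j\<le>n. c j * poly_inner N (P j) (P i))"
      by (subst c) (simp add: poly_inner_sum_left[OF moments] poly_inner_smult_left)
    also have "\<dots> = (\<Sum>j\<le>n. if j = i then c j else 0)"
      using poly_inner_orthonormal_polys[OF P] by (intro sum.cong) auto
    finally show ?thesis
      using that by simp
  qed
  then show ?thesis
    by (subst (1) c) (auto intro!: sum.cong)
qed

section \<open>Reproducing kernel and Fourier partial sums\<close>

definition kernel_poly :: "real measure \<Rightarrow> nat \<Rightarrow> real \<Rightarrow> real poly" where
  "kernel_poly N n b = (\<Sum>j\<le>n. smult (poly (onpolys N j) b) (onpolys N j))"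

definition fourier_poly :: "real measure \<Rightarrow> real measure \<Rightarrow> nat \<Rightarrow> (real \<Rightarrow> real) \<Rightarrow> real poly" where
  "fourier_poly N \<mu> n g = (\<Sum>j\<le>n. smult (\<integral>y. poly (onpolys N j) y * g y \<partial>\<mu>) (onpolys N j))"

lemma poly_kernel_poly: "poly (kernel_poly N n b) x = opkernel N n x b"
  unfolding kernel_poly_def opkernel_def by (simp add: poly_sum mult.commute)

lemma opkernel_integral:
  assumes g: "has_moments \<mu> g"
  shows "integrable \<mu> (\<lambda>y. opkernel N n x y * g y)"
    and "(\<integral>y. opkernel N n x y * g y \<partial>\<mu>) = poly (fourier_poly N \<mu> n g) x"
proof -
  have eq: "(\<lambda>y. opkernel N n x y * g y) =
      (\<lambda>y. \<Sum>j\<le>n. poly (onpolys N j) x * (poly (onpolys N j) y * g y))"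
    unfolding opkernel_def by (simp add: sum_distrib_right mult.assoc)
  show "integrable \<mu> (\<lambda>y. opkernel N n x y * g y)"
    unfolding eq using integrable_poly_mult[OF g] by auto
  show "(\<integral>y. opkernel N n x y * g y \<partial>\<mu>) = poly (fourier_poly N \<mu> n g) x"
    unfolding eq fourier_poly_def using integrable_poly_mult[OF g]
    by (simp add: integral_sum poly_sum mult.commute)
qed

context
  fixes N :: "real measure"
  assumes op: "op_measure N"
begin

private lemmas P = orthonormal_polys_onpolys[OF op]
private lemmas moments = op_measureD(2)[OF op]

lemma degree_kernel_poly: "degree (kernel_poly N n b) \<le> n"
  unfolding kernel_poly_def
  by (rule degree_sum_le) (auto intro: order.trans[OF degree_smult_le] simp: degree_orthonormal_polys[OF P])

lemma degree_fourier_poly: "degree (fourier_poly N \<mu> n g) \<le> n"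
  unfolding fourier_poly_def
  by (rule degree_sum_le) (auto intro: order.trans[OF degree_smult_le] simp: degree_orthonormal_polys[OF P])

lemma poly_inner_kernel_poly:
  assumes "degree q \<le> n"
  shows "poly_inner N q (kernel_poly N n b) = poly q b"
proof -
  have "poly q b = poly (\<Sum>j\<le>n. smult (poly_inner N q (onpolys N j)) (onpolys N j)) b"
    using orthonormal_polys_expansion[OF P moments assms] by simp
  then show ?thesis
    unfolding kernel_poly_def
    by (simp add: poly_inner_sum_right[OF moments] poly_inner_smult_right poly_sum mult.commute)
qed

lemma opkernel_diag_pos: "opkernel N n b b > 0"
proof -
  let ?P = "onpolys N"
  have "degree (?P 0) = 0"
    by (rule degree_orthonormal_polys[OF P])
  then have "poly (?P 0) b = lead_coeff (?P 0)"
    by (simp add: poly_altdef)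
  then have "poly (?P 0) b \<noteq> 0"
    using lead_coeff_orthonormal_polys_pos[OF P, of 0] by (metis less_irrefl)
  then have "0 < poly (?P 0) b * poly (?P 0) b"
    by (metis not_real_square_gt_zero)
  also have "\<dots> \<le> (\<Sum>j\<le>n. poly (?P j) b * poly (?P j) b)"
    by (rule member_le_sum[of 0 "{..n}" "\<lambda>j. poly (?P j) b * poly (?P j) b", simplified])
  finally show ?thesis
    unfolding opkernel_def .
qed

lemma kernel_poly_multiple_if_orthogonal:
  assumes D: "degree D \<le> n"
    and orth: "\<And>q. degree q \<le> n \<Longrightarrow> poly q b = 0 \<Longrightarrow> poly_inner N q D = 0"
  shows "D = smult (poly D b / opkernel N n b b) (kernel_poly N n b)"
proof -
  let ?P = "onpolys N" and ?K = "opkernel N n b b"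
  have K: "?K > 0"
    by (rule opkernel_diag_pos)
  have coeff: "poly_inner N D (?P j) = poly D b / ?K * poly (?P j) b" if "j \<le> n" for j
  proof -
    define r where "r = ?P j - smult (poly (?P j) b / ?K) (kernel_poly N n b)"
    have "degree r \<le> n"
      unfolding r_def using that degree_kernel_poly
      by (intro degree_diff_le) (auto intro: order.trans[OF degree_smult_le]
          simp: degree_orthonormal_polys[OF P])
    moreover have "poly r b = 0"
      unfolding r_def using K by (simp add: poly_kernel_poly)
    ultimately have "poly_inner N r D = 0"
      by (rule orth)
    moreover have "poly_inner N (kernel_poly N n b) D = poly D b"
      using poly_inner_kernel_poly[OF D] poly_inner_commute by metis
    ultimately show ?thesis
      unfolding r_def by (simp add: poly_inner_diff_left[OF moments] poly_inner_smult_left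
          poly_inner_commute[of N D])
  qed
  have "D = (\<Sum>j\<le>n. smult (poly_inner N D (?P j)) (?P j))"
    by (rule orthonormal_polys_expansion[OF P moments D])
  also have "\<dots> = smult (poly D b / ?K) (kernel_poly N n b)"
    unfolding kernel_poly_def using coeff
    by (intro poly_eqI) (simp add: coeff_sum sum_distrib_left mult.assoc)
  finally show ?thesis .
qed

lemma integral_eq_poly_inner_fourier_poly:
  assumes g: "has_moments \<mu> g" and q: "degree q \<le> n"
  shows "(\<integral>y. poly q y * g y \<partial>\<mu>) = poly_inner N q (fourier_poly N \<mu> n g)"
proof -
  let ?P = "onpolys N"
  have "(\<integral>y. poly q y * g y \<partial>\<mu>) =
      (\<Sum>j\<le>n. poly_inner N q (?P j) * (\<integral>y. poly (?P j) y * g y \<partial>\<mu>))"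
    by (subst orthonormal_polys_expansion[OF P moments q])
      (simp add: integral_poly_sum_mult[OF g] mult.assoc)
  then show ?thesis
    unfolding fourier_poly_def
    by (simp add: poly_inner_sum_right[OF moments] poly_inner_smult_right mult.commute)
qed

lemma fourier_poly_unique:
  assumes Q: "degree Q \<le> n"
    and represents: "\<And>q. degree q \<le> n \<Longrightarrow> (\<integral>y. poly q y * g y \<partial>\<mu>) = poly_inner N q Q"
  shows "fourier_poly N \<mu> n g = Q"
proof -
  have "fourier_poly N \<mu> n g = (\<Sum>j\<le>n. smult (poly_inner N Q (onpolys N j)) (onpolys N j))"
    unfolding fourier_poly_def using represents[of "onpolys N _"]
    by (intro sum.cong) (auto simp: poly_inner_commute degree_orthonormal_polys[OF P])
  also have "\<dots> = Q"
    by (rule orthonormal_polys_expansion[OF P moments Q, symmetric])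
  finally show ?thesis .
qed

lemma integrable_onpolys_mult_if_opkernel_integrable:
  assumes K: "\<And>n x. integrable N (\<lambda>y. opkernel N n x y * g y)"
  shows "integrable N (\<lambda>y. poly (onpolys N n) y * g y)"
proof -
  let ?P = "onpolys N"
  have "?P n \<noteq> 0"
    using lead_coeff_orthonormal_polys_pos[OF P, of n] by auto
  then obtain x where x: "poly (?P n) x \<noteq> 0"
    using poly_all_0_iff_0 by blast
  have "integrable N (\<lambda>y. poly (?P n) x * (poly (?P n) y * g y))"
  proof (cases n)
    case 0
    then show ?thesis
      using K[of n x] by (simp add: opkernel_def mult.assoc)
  next
    case (Suc m)
    have "(\<lambda>y. opkernel N n x y * g y - opkernel N m x y * g y) =
        (\<lambda>y. poly (?P n) x * (poly (?P n) y * g y))"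
      using Suc by (simp add: opkernel_def algebra_simps)
    then show ?thesis
      using Bochner_Integration.integrable_diff[OF K K] by metis
  qed
  then show ?thesis
    using x by simp
qed

lemma has_moments_if_opkernel_integrable:
  assumes "\<And>n x. integrable N (\<lambda>y. opkernel N n x y * g y)"
  shows "has_moments N g"
  unfolding has_moments_def
proof
  fix j
  let ?P = "onpolys N"
  have "x ^ j = (\<Sum>i\<le>j. poly_inner N (monom 1 j) (?P i) * poly (?P i) x)" for x
    using arg_cong[OF orthonormal_polys_expansion[OF P moments, of "monom 1 j" j], of "\<lambda>q. poly q x"]
    by (simp add: poly_monom poly_sum degree_monom_eq)
  then have "(\<lambda>x. x ^ j * g x) =
      (\<lambda>x. \<Sum>i\<le>j. poly_inner N (monom 1 j) (?P i) * (poly (?P i) x * g x))"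
    by (simp add: sum_distrib_right mult.assoc)
  then show "integrable N (\<lambda>x. x ^ j * g x)"
    using integrable_onpolys_mult_if_opkernel_integrable[OF assms] by simp
qed

end

section \<open>Adding point masses\<close>

lemma sets_nu_measure [simp, measurable_cong]: "sets (nu_measure \<mu> a M k) = sets borel"
  unfolding nu_measure_def by (simp add: sets_measure_of_conv) (metis sets.sigma_sets_eq space_borel)

lemma space_nu_measure [simp]: "space (nu_measure \<mu> a M k) = UNIV"
  unfolding nu_measure_def by (simp add: space_measure_of_conv)

lemma emeasure_nu_measure:
  assumes sets: "sets \<mu> = sets borel" and S: "S \<in> sets borel"
  shows "emeasure (nu_measure \<mu> a M k) S = emeasure \<mu> S + (\<Sum>i<k. ennreal (M i) * indicator S (a i))"
  unfolding nu_measure_def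
proof (rule emeasure_measure_of_sigma[OF _ _ _ S])
  show "sigma_algebra UNIV (sets borel)"
    by (metis sets.sigma_algebra_axioms space_borel)
  show "positive (sets borel) (\<lambda>S. emeasure \<mu> S + (\<Sum>i<k. ennreal (M i) * indicator S (a i)))"
    by (simp add: positive_def)
  show "countably_additive (sets borel) (\<lambda>S. emeasure \<mu> S + (\<Sum>i<k. ennreal (M i) * indicator S (a i)))"
  proof (rule countably_additiveI)
    fix A :: "nat \<Rightarrow> real set"
    assume A: "range A \<subseteq> sets borel" "disjoint_family A"
    have "(\<Sum>n. emeasure \<mu> (A n) + (\<Sum>i<k. ennreal (M i) * indicator (A n) (a i)))
        = (\<Sum>n. emeasure \<mu> (A n)) + (\<Sum>n. \<Sum>i<k. ennreal (M i) * indicator (A n) (a i))"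
      by (rule suminf_add[symmetric]) (auto intro: summableI)
    also have "(\<Sum>n. \<Sum>i<k. ennreal (M i) * indicator (A n) (a i))
        = (\<Sum>i<k. \<Sum>n. ennreal (M i) * indicator (A n) (a i))"
      by (rule suminf_sum) (auto intro: summableI)
    also have "\<dots> = (\<Sum>i<k. ennreal (M i) * indicator (\<Union>n. A n) (a i))"
      using A(2) by (simp add: suminf_indicator)
    also have "(\<Sum>n. emeasure \<mu> (A n)) = emeasure \<mu> (\<Union>n. A n)"
      using A sets by (intro suminf_emeasure) auto
    finally show "(\<Sum>n. emeasure \<mu> (A n) + (\<Sum>i<k. ennreal (M i) * indicator (A n) (a i)))
      = emeasure \<mu> (\<Union>n. A n) + (\<Sum>i<k. ennreal (M i) * indicator (\<Union>n. A n) (a i))" .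
  qed
qed

lemma nu_measure_0: "sets \<mu> = sets borel \<Longrightarrow> nu_measure \<mu> a M 0 = \<mu>"
  by (rule measure_eqI) (auto simp: emeasure_nu_measure)

lemma SUP_sum_point_masses:
  assumes "\<And>x. incseq (\<lambda>i. U i x)"
  shows "(SUP i. (\<Sum>j<k. ennreal (M j) * U i (a j))) = (\<Sum>j<k. ennreal (M j) * (SUP i. U i) (a j))"
proof -
  have "(SUP i. (\<Sum>j<k. ennreal (M j) * U i (a j))) = (\<Sum>j<k. SUP i. ennreal (M j) * U i (a j))"
    using assms by (intro ennreal_SUP_sum) (auto simp: incseq_def intro!: mult_left_mono)
  then show ?thesis
    by (simp only: SUP_mult_left_ennreal SUP_apply)
qed

lemma nn_integral_nu_measure:
  assumes sets: "sets \<mu> = sets borel" and f: "f \<in> borel_measurable borel"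
  shows "(\<integral>\<^sup>+x. f x \<partial>nu_measure \<mu> a M k) = (\<integral>\<^sup>+x. f x \<partial>\<mu>) + (\<Sum>i<k. ennreal (M i) * f (a i))"
  using f
proof (induct rule: borel_measurable_induct)
  case (cong f g)
  have "(\<integral>\<^sup>+x. f x \<partial>nu_measure \<mu> a M k) = (\<integral>\<^sup>+x. g x \<partial>nu_measure \<mu> a M k)"
    using cong by (intro nn_integral_cong) auto
  moreover have "(\<integral>\<^sup>+x. f x \<partial>\<mu>) = (\<integral>\<^sup>+x. g x \<partial>\<mu>)"
    using cong sets by (intro nn_integral_cong) (auto simp: sets_eq_imp_space_eq[OF sets])
  ultimately show ?case
    using cong by simp
next
  case (set A)
  then show ?case
    using sets by (simp add: emeasure_nu_measure nn_integral_indicator)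
next
  case (mult u c)
  then have "u \<in> borel_measurable \<mu>" "u \<in> borel_measurable (nu_measure \<mu> a M k)"
    by (simp_all add: measurable_cong_sets[OF sets refl])
  with mult show ?case
    by (simp add: nn_integral_cmult distrib_left sum_distrib_left ac_simps)
next
  case (add u v)
  then have "u \<in> borel_measurable \<mu>" "v \<in> borel_measurable \<mu>"
    "u \<in> borel_measurable (nu_measure \<mu> a M k)" "v \<in> borel_measurable (nu_measure \<mu> a M k)"
    by (simp_all add: measurable_cong_sets[OF sets refl])
  with add show ?case
    by (simp add: nn_integral_add distrib_left sum.distrib ac_simps)
next
  case (seq U)
  have mu: "U i \<in> borel_measurable \<mu>" and nu: "U i \<in> borel_measurable (nu_measure \<mu> a M k)" for i
    using seq(1)[of i] by (simp_all add: measurable_cong_sets[OF sets refl])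
  have inc: "incseq (\<lambda>n. U n x)" for x
    using seq(4) by (auto simp: incseq_def le_fun_def)
  have "(\<integral>\<^sup>+x. (SUP i. U i) x \<partial>nu_measure \<mu> a M k) = (SUP i. \<integral>\<^sup>+x. U i x \<partial>nu_measure \<mu> a M k)"
    unfolding SUP_apply by (rule nn_integral_monotone_convergence_SUP[OF seq(4) nu])
  also have "\<dots> = (SUP i. (\<integral>\<^sup>+x. U i x \<partial>\<mu>) + (\<Sum>j<k. ennreal (M j) * U i (a j)))"
    using seq by simp
  also have "\<dots> = (SUP i. \<integral>\<^sup>+x. U i x \<partial>\<mu>) + (SUP i. (\<Sum>j<k. ennreal (M j) * U i (a j)))"
  proof (rule ennreal_SUP_add)
    show "incseq (\<lambda>i. \<integral>\<^sup>+x. U i x \<partial>\<mu>)"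
      using seq(4) by (auto simp: incseq_def le_fun_def intro!: nn_integral_mono)
    show "incseq (\<lambda>i. \<Sum>j<k. ennreal (M j) * U i (a j))"
      using inc by (auto simp: incseq_def intro!: sum_mono mult_left_mono)
  qed
  also have "(SUP i. (\<Sum>j<k. ennreal (M j) * U i (a j))) = (\<Sum>j<k. ennreal (M j) * (SUP i. U i) (a j))"
    using inc by (rule SUP_sum_point_masses)
  also have "(SUP i. \<integral>\<^sup>+x. U i x \<partial>\<mu>) = (\<integral>\<^sup>+x. (SUP i. U i) x \<partial>\<mu>)"
    unfolding SUP_apply by (rule nn_integral_monotone_convergence_SUP[OF seq(4) mu, symmetric])
  finally show ?case .
qed

context
  fixes \<mu> :: "real measure" and M :: "nat \<Rightarrow> real" and k :: nat
  assumes sets: "sets \<mu> = sets borel" and M_nonneg: "\<And>i. i < k \<Longrightarrow> M i \<ge> 0"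
begin

private lemma integral_nu_measure_nonneg:
  assumes h: "h \<in> borel_measurable borel" "integrable \<mu> h" "\<And>x. h x \<ge> 0"
  shows "integrable (nu_measure \<mu> a M k) h"
    and "(\<integral>x. h x \<partial>nu_measure \<mu> a M k) = (\<integral>x. h x \<partial>\<mu>) + (\<Sum>i<k. M i * h (a i))"
proof -
  have nonneg: "0 \<le> (\<integral>x. h x \<partial>\<mu>)" "0 \<le> (\<Sum>i<k. M i * h (a i))"
    using h M_nonneg by (auto intro!: sum_nonneg)
  have "(\<integral>\<^sup>+x. ennreal (h x) \<partial>\<mu>) = ennreal (\<integral>x. h x \<partial>\<mu>)"
    using h by (intro nn_integral_eq_integral) auto
  moreover have "(\<Sum>i<k. ennreal (M i) * ennreal (h (a i))) = ennreal (\<Sum>i<k. M i * h (a i))"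
    using M_nonneg h by (simp add: ennreal_mult[symmetric]) (intro sum_ennreal; simp)
  ultimately have nn: "(\<integral>\<^sup>+x. ennreal (h x) \<partial>nu_measure \<mu> a M k) =
      ennreal ((\<integral>x. h x \<partial>\<mu>) + (\<Sum>i<k. M i * h (a i)))"
    using nn_integral_nu_measure[OF sets, of "\<lambda>x. ennreal (h x)" a M k] h ennreal_plus[OF nonneg]
    by simp
  show "integrable (nu_measure \<mu> a M k) h"
    using nn h by (intro integrableI_nn_integral_finite) auto
  have "(\<integral>x. h x \<partial>nu_measure \<mu> a M k) = enn2real (\<integral>\<^sup>+x. ennreal (h x) \<partial>nu_measure \<mu> a M k)"
    using h by (intro integral_eq_nn_integral) auto
  also have "\<dots> = (\<integral>x. h x \<partial>\<mu>) + (\<Sum>i<k. M i * h (a i))"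
    by (simp only: nn enn2real_ennreal[OF add_nonneg_nonneg[OF nonneg]])
  finally show "(\<integral>x. h x \<partial>nu_measure \<mu> a M k) = (\<integral>x. h x \<partial>\<mu>) + (\<Sum>i<k. M i * h (a i))" .
qed

lemma integral_nu_measure:
  assumes h: "h \<in> borel_measurable borel" "integrable \<mu> h"
  shows "integrable (nu_measure \<mu> a M k) h"
    and "(\<integral>x. h x \<partial>nu_measure \<mu> a M k) = (\<integral>x. h x \<partial>\<mu>) + (\<Sum>i<k. M i * h (a i))"
proof -
  define hp where "hp x = max (h x) 0" for x
  define hn where "hn x = max (- h x) 0" for x
  have diff: "hp x - hn x = h x" for x
    by (simp add: hp_def hn_def)
  then have h_eq: "h = (\<lambda>x. hp x - hn x)"
    by simp
  have parts: "hp \<in> borel_measurable borel" "integrable \<mu> hp" "\<And>x. hp x \<ge> 0"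
    "hn \<in> borel_measurable borel" "integrable \<mu> hn" "\<And>x. hn x \<ge> 0"
    using h unfolding hp_def hn_def by auto
  note hp = integral_nu_measure_nonneg[OF parts(1-3)] and hn = integral_nu_measure_nonneg[OF parts(4-6)]
  show "integrable (nu_measure \<mu> a M k) h"
    using hp(1) hn(1) by (subst h_eq) auto
  have "(\<integral>x. h x \<partial>nu_measure \<mu> a M k)
      = (\<integral>x. hp x \<partial>nu_measure \<mu> a M k) - (\<integral>x. hn x \<partial>nu_measure \<mu> a M k)"
    using hp(1) hn(1) by (subst h_eq) simp
  also have "\<dots> = (\<integral>x. hp x - hn x \<partial>\<mu>) + (\<Sum>i<k. M i * (hp (a i) - hn (a i)))"
    using parts by (simp add: hp(2) hn(2) right_diff_distrib sum_subtractf)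
  finally show "(\<integral>x. h x \<partial>nu_measure \<mu> a M k) = (\<integral>x. h x \<partial>\<mu>) + (\<Sum>i<k. M i * h (a i))"
    by (simp only: diff)
qed

lemma poly_inner_nu_measure:
  assumes "has_moments \<mu> (\<lambda>_. 1)"
  shows "poly_inner (nu_measure \<mu> a M k) p q = poly_inner \<mu> p q + (\<Sum>i<k. M i * (poly p (a i) * poly q (a i)))"
  unfolding poly_inner_def
  by (rule integral_nu_measure) (use integrable_poly_mult[OF has_moments_poly[OF assms]] in auto)

lemma op_measure_nu_measure:
  assumes "op_measure \<mu>"
  shows "op_measure (nu_measure \<mu> a M k)"
proof -
  note \<mu> = op_measureD[OF assms]
  have "has_moments (nu_measure \<mu> a M k) (\<lambda>_. 1)"
    using \<mu>(2) unfolding has_moments_def by (auto intro!: integral_nu_measure)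
  moreover have "poly_inner (nu_measure \<mu> a M k) q q > 0" if "q \<noteq> 0" for q
  proof -
    have "poly_inner \<mu> q q > 0"
      using \<mu>(3) that by (auto simp: poly_inner_pos_def)
    moreover have "(\<Sum>i<k. M i * (poly q (a i) * poly q (a i))) \<ge> 0"
      using M_nonneg by (auto intro!: sum_nonneg)
    ultimately show ?thesis
      by (simp add: poly_inner_nu_measure[OF \<mu>(2)])
  qed
  ultimately show ?thesis
    by (simp add: op_measure_def poly_inner_pos_def)
qed

end

section \<open>Multiplying by squared distances\<close>

lemma sets_muA [simp, measurable_cong]: "sets (muA \<mu> a A) = sets \<mu>"
  unfolding muA_def by simp

lemma muA_empty [simp]: "muA \<mu> a {} = \<mu>"
  unfolding muA_def by (simp add: density_1)

lemma wA_empty [simp]: "wA a {} p x = 1"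
  unfolding wA_def by simp

lemma wA_singleton: "wA a {k} p x = \<bar>x - a k\<bar> powr (1 - 2 / p)"
  unfolding wA_def by simp

lemma wA_insert: "finite A \<Longrightarrow> k \<notin> A \<Longrightarrow> wA a {k} p x * wA a A p x = wA a (insert k A) p x"
  unfolding wA_def by simp

lemma poly_linear_mult: "poly ([:- b, 1:] * r) x = (x - b) * poly r (x :: real)"
  by (simp add: algebra_simps)

lemma muA_insert:
  assumes sets: "sets \<mu> = sets borel" and "finite A" "k \<notin> A"
  shows "muA (muA \<mu> a {k}) a A = muA \<mu> a (insert k A)"
proof -
  have "(\<lambda>x. ennreal (\<Prod>i\<in>B. (x - a i)^2)) \<in> borel_measurable \<mu>" for B
    by (simp add: measurable_cong_sets[OF sets refl])
  then show ?thesis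
    unfolding muA_def using assms
    by (simp add: density_density_eq ennreal_mult'[symmetric] prod_nonneg)
qed

context
  fixes \<mu> :: "real measure" and a :: "nat \<Rightarrow> real" and k :: nat
  assumes sets: "sets \<mu> = sets borel"
begin

lemma muA_singleton_density: "muA \<mu> a {k} = density \<mu> (\<lambda>x. ennreal ((x - a k)^2))"
  unfolding muA_def by simp

lemma integrable_muA_singleton_iff:
  assumes "f \<in> borel_measurable borel"
  shows "integrable (muA \<mu> a {k}) f \<longleftrightarrow> integrable \<mu> (\<lambda>x. (x - a k)^2 * f x)"
  unfolding muA_singleton_density using assms
  by (subst integrable_density) (auto simp: measurable_cong_sets[OF sets refl])

lemma integral_muA_singleton:
  assumes "f \<in> borel_measurable borel"
  shows "(\<integral>x. f x \<partial>muA \<mu> a {k}) = (\<integral>x. (x - a k)^2 * f x \<partial>\<mu>)"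
  unfolding muA_singleton_density using assms
  by (subst integral_density) (auto simp: measurable_cong_sets[OF sets refl])

lemma nn_integral_muA_singleton:
  assumes "f \<in> borel_measurable borel"
  shows "(\<integral>\<^sup>+x. ennreal (f x) \<partial>muA \<mu> a {k}) = (\<integral>\<^sup>+x. ennreal ((x - a k)^2 * f x) \<partial>\<mu>)"
  unfolding muA_singleton_density using assms
  by (subst nn_integral_density) (auto simp: measurable_cong_sets[OF sets refl] ennreal_mult')

lemma has_moments_muA_singleton_div:
  assumes g: "g \<in> borel_measurable borel" "has_moments \<mu> g"
  shows "has_moments (muA \<mu> a {k}) (\<lambda>y. g y / (y - a k))"
  unfolding has_moments_def
proof
  fix j
  have "integrable \<mu> (\<lambda>x. poly ([:- a k, 1:] * monom 1 j) x * g x)"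
    by (rule integrable_poly_mult[OF g(2)])
  moreover have "poly ([:- a k, 1:] * monom 1 j) x * g x = (x - a k)^2 * (x ^ j * (g x / (x - a k)))" for x
    unfolding poly_linear_mult by (cases "x = a k") (simp_all add: poly_monom power2_eq_square)
  ultimately show "integrable (muA \<mu> a {k}) (\<lambda>x. x ^ j * (g x / (x - a k)))"
    using g by (subst integrable_muA_singleton_iff) auto
qed

lemma integral_muA_singleton_div:
  assumes "g \<in> borel_measurable borel"
  shows "(\<integral>y. poly r y * (g y / (y - a k)) \<partial>muA \<mu> a {k}) = (\<integral>y. poly ([:- a k, 1:] * r) y * g y \<partial>\<mu>)"
  unfolding poly_linear_mult using assms
  by (subst integral_muA_singleton) (auto simp: power2_eq_square intro!: Bochner_Integration.integral_cong)

lemma poly_inner_muA_singleton: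
  "poly_inner (muA \<mu> a {k}) r s = poly_inner \<mu> ([:- a k, 1:] * r) ([:- a k, 1:] * s)"
  unfolding poly_inner_def poly_linear_mult
  by (subst integral_muA_singleton) (auto simp: power2_eq_square mult_ac)

lemma op_measure_muA_singleton:
  assumes "op_measure \<mu>"
  shows "op_measure (muA \<mu> a {k})"
proof -
  note \<mu> = op_measureD[OF assms]
  have "has_moments (muA \<mu> a {k}) (\<lambda>_. 1)"
    unfolding has_moments_def
  proof
    fix j
    have "integrable \<mu> (\<lambda>x. poly ([:- a k, 1:] * ([:- a k, 1:] * monom 1 j)) x * 1)"
      by (rule integrable_poly_mult[OF \<mu>(2)])
    then show "integrable (muA \<mu> a {k}) (\<lambda>x. x ^ j * 1)"
      unfolding poly_linear_mult
      by (subst integrable_muA_singleton_iff) (auto simp: poly_monom power2_eq_square mult_ac)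
  qed
  moreover have "poly_inner (muA \<mu> a {k}) q q > 0" if "q \<noteq> 0" for q
  proof -
    have "[:- a k, 1:] * q \<noteq> 0"
      using that by (metis mult_eq_0_iff pCons_eq_0_iff zero_neq_one)
    with \<mu>(3) show ?thesis
      unfolding poly_inner_pos_def poly_inner_muA_singleton by blast
  qed
  ultimately show ?thesis
    using sets by (simp add: op_measure_def poly_inner_pos_def)
qed

lemma emeasure_muA_singleton_null:
  assumes "emeasure \<mu> {c} = 0"
  shows "emeasure (muA \<mu> a {k}) {c} = 0"
proof -
  have "{c} \<in> null_sets \<mu>"
    using assms sets by (simp add: null_sets_def)
  then have "AE x in \<mu>. x \<in> {c} \<longrightarrow> ennreal ((x - a k)^2) = 0"
    by (intro AE_I'[of "{c}"]) auto
  then have "{c} \<in> null_sets (muA \<mu> a {k})"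
    unfolding muA_singleton_density
    by (subst null_sets_density_iff) (auto simp: sets measurable_cong_sets[OF sets refl])
  then show ?thesis
    by (simp add: null_setsD1)
qed

text \<open>This is where the transformed masses \<open>M\<^sub>i (a\<^sub>i - a\<^sub>k)\<^sup>2\<close> come from.\<close>

lemma poly_inner_nu_measure_muA_singleton:
  assumes "op_measure \<mu>" and M: "\<And>i. i < k' \<Longrightarrow> M i \<ge> 0"
  shows "poly_inner (nu_measure (muA \<mu> a {k}) a (\<lambda>i. M i * (a i - a k)^2) k') r s
       = poly_inner (nu_measure \<mu> a M k') ([:- a k, 1:] * r) ([:- a k, 1:] * s)"
proof -
  note \<mu> = op_measureD[OF assms(1)] and \<mu>' = op_measureD[OF op_measure_muA_singleton[OF assms(1)]]
  have "poly_inner (nu_measure (muA \<mu> a {k}) a (\<lambda>i. M i * (a i - a k)^2) k') r s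
     = poly_inner (muA \<mu> a {k}) r s + (\<Sum>i<k'. M i * (a i - a k)^2 * (poly r (a i) * poly s (a i)))"
    using M by (intro poly_inner_nu_measure[OF \<mu>'(1) _ \<mu>'(2)]) simp
  then show ?thesis
    using poly_inner_nu_measure[OF \<mu>(1) M \<mu>(2), where a=a and p="[:- a k, 1:] * r" and q="[:- a k, 1:] * s"]
    unfolding poly_inner_muA_singleton poly_linear_mult by (simp add: power2_eq_square mult_ac)
qed

end

section \<open>Partial sums after adding one point mass\<close>

lemma fourier_poly_eq_add_kernel_multiple:
  fixes \<rho> \<mu> :: "real measure" and b :: real and n :: nat and R :: "real poly"
  assumes \<rho>: "op_measure \<rho>" and g: "has_moments \<mu> g"
    and R: "degree R \<le> n" "poly R b = 0"
    and R_represents: "\<And>q. degree q \<le> n \<Longrightarrow> poly q b = 0 \<Longrightarrow>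
        (\<integral>y. poly q y * g y \<partial>\<mu>) = poly_inner \<rho> q R"
  shows "fourier_poly \<rho> \<mu> n g =
    R + smult (poly (fourier_poly \<rho> \<mu> n g) b / opkernel \<rho> n b b) (kernel_poly \<rho> n b)"
proof -
  define F where "F = fourier_poly \<rho> \<mu> n g"
  have "degree (F - R) \<le> n"
    unfolding F_def using degree_fourier_poly[OF \<rho>] R(1) by (rule degree_diff_le)
  moreover have "poly_inner \<rho> q (F - R) = 0" if "degree q \<le> n" "poly q b = 0" for q
    unfolding F_def using integral_eq_poly_inner_fourier_poly[OF \<rho> g that(1)] R_represents[OF that]
    by (simp add: poly_inner_diff_right[OF op_measureD(2)[OF \<rho>]])
  ultimately have "F - R = smult (poly (F - R) b / opkernel \<rho> n b b) (kernel_poly \<rho> n b)"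
    by (rule kernel_poly_multiple_if_orthogonal[OF \<rho>])
  then show ?thesis
    using R(2) unfolding F_def[symmetric] by (simp add: algebra_simps)
qed

text \<open>Only the coefficient of the kernel polynomial changes; it is fixed by
  \<open>\<gamma> (1 + m K\<^sub>n(b, b)) = 1\<close>.\<close>

lemma fourier_poly_add_point_mass:
  fixes \<rho> \<nu> \<mu> :: "real measure" and b m :: real and n :: nat and R :: "real poly"
  assumes \<rho>: "op_measure \<rho>" and \<nu>: "op_measure \<nu>"
    and inner: "\<And>p q. poly_inner \<nu> p q = poly_inner \<rho> p q + m * (poly p b * poly q b)"
    and m: "m \<ge> 0" and g: "has_moments \<mu> g"
    and R: "degree R \<le> n" "poly R b = 0"
    and R_represents: "\<And>q. degree q \<le> n \<Longrightarrow> poly q b = 0 \<Longrightarrow>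
        (\<integral>y. poly q y * g y \<partial>\<mu>) = poly_inner \<rho> q R"
  defines "\<gamma> \<equiv> 1 / (1 + m * opkernel \<rho> n b b)"
  shows "fourier_poly \<nu> \<mu> n g = smult \<gamma> (fourier_poly \<rho> \<mu> n g) + smult (1 - \<gamma>) R"
proof -
  note moments = op_measureD(2)[OF \<rho>]
  define K where "K = opkernel \<rho> n b b"
  define F where "F = fourier_poly \<rho> \<mu> n g"
  define c where "c = poly F b / K"
  have K: "K > 0"
    unfolding K_def by (rule opkernel_diag_pos[OF \<rho>])
  moreover have "0 \<le> m * K"
    using m K by simp
  ultimately have \<gamma>: "\<gamma> * (1 + m * K) = 1"
    by (simp add: \<gamma>_def K_def)
  have F: "F = R + smult c (kernel_poly \<rho> n b)"
    unfolding F_def c_def K_def by (rule fourier_poly_eq_add_kernel_multiple[OF \<rho> g R R_represents])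
  have Q: "smult \<gamma> F + smult (1 - \<gamma>) R = R + smult (\<gamma> * c) (kernel_poly \<rho> n b)"
    unfolding F by (simp add: algebra_simps smult_add_right smult_diff_left)
  show ?thesis
    unfolding F_def[symmetric] Q
  proof (rule fourier_poly_unique[OF \<nu>])
    show "degree (R + smult (\<gamma> * c) (kernel_poly \<rho> n b)) \<le> n"
      using R(1) degree_kernel_poly[OF \<rho>] by (intro degree_add_le order.trans[OF degree_smult_le])
    fix q :: "real poly"
    assume q: "degree q \<le> n"
    have "poly_inner \<nu> q (R + smult (\<gamma> * c) (kernel_poly \<rho> n b)) =
        poly_inner \<rho> q R + c * poly q b * (\<gamma> * (1 + m * K))"
      using R(2) by (simp add: inner poly_inner_add_right[OF moments] poly_inner_smult_right
          poly_inner_kernel_poly[OF \<rho> q] poly_kernel_poly K_def algebra_simps)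
    also have "\<dots> = poly_inner \<rho> q F"
      by (simp add: \<gamma> F poly_inner_add_right[OF moments] poly_inner_smult_right
          poly_inner_kernel_poly[OF \<rho> q])
    finally show "(\<integral>y. poly q y * g y \<partial>\<mu>) = poly_inner \<nu> q (R + smult (\<gamma> * c) (kernel_poly \<rho> n b))"
      unfolding F_def by (simp add: integral_eq_poly_inner_fourier_poly[OF \<rho> g q])
  qed
qed

lemma vanishing_poly_eq_linear_mult:
  fixes q :: "real poly"
  assumes "poly q b = 0"
  obtains r where "q = [:- b, 1:] * r" "degree r = degree q - 1"
proof -
  obtain r where r: "q = [:- b, 1:] * r"
    using assms poly_eq_0_iff_dvd by (metis dvdE)
  moreover have "degree r = degree q - 1"
  proof (cases "r = 0")
    case False
    then have "degree ([:- b, 1:] * r) = degree [:- b, 1:] + degree r"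
      by (intro degree_mult_eq) simp_all
    then show ?thesis
      using r by simp
  qed (simp add: r)
  ultimately show ?thesis
    using that by blast
qed

lemma integral_vanishing_poly_eq_poly_inner_nu_measure_muA:
  fixes \<mu> :: "real measure" and a M :: "nat \<Rightarrow> real" and k n :: nat
  assumes \<mu>: "op_measure \<mu>" and M: "\<And>i. i < k \<Longrightarrow> M i \<ge> 0"
    and g: "g \<in> borel_measurable borel" "has_moments \<mu> g"
    and q: "degree q \<le> n" "poly q (a k) = 0"
  shows "(\<integral>y. poly q y * g y \<partial>\<mu>) = poly_inner (nu_measure \<mu> a M k) q ([:- a k, 1:] *
    fourier_poly (nu_measure (muA \<mu> a {k}) a (\<lambda>i. M i * (a i - a k)^2) k) (muA \<mu> a {k}) (n - 1)
      (\<lambda>y. g y / (y - a k)))"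
proof -
  note sets = op_measureD(1)[OF \<mu>]
  define \<rho>' where "\<rho>' = nu_measure (muA \<mu> a {k}) a (\<lambda>i. M i * (a i - a k)^2) k"
  have \<rho>': "op_measure \<rho>'"
    unfolding \<rho>'_def
    by (intro op_measure_nu_measure op_measure_muA_singleton[OF sets \<mu>]) (use M sets in auto)
  obtain r where r: "q = [:- a k, 1:] * r" "degree r = degree q - 1"
    using vanishing_poly_eq_linear_mult[OF q(2)] by blast
  have "(\<integral>y. poly q y * g y \<partial>\<mu>) = (\<integral>y. poly r y * (g y / (y - a k)) \<partial>muA \<mu> a {k})"
    unfolding r(1) by (rule integral_muA_singleton_div[OF sets g(1), symmetric])
  also have "\<dots> = poly_inner \<rho>' r (fourier_poly \<rho>' (muA \<mu> a {k}) (n - 1) (\<lambda>y. g y / (y - a k)))"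
    using q r(2)
    by (intro integral_eq_poly_inner_fourier_poly[OF \<rho>'] has_moments_muA_singleton_div[OF sets g]) auto
  also have "\<dots> = poly_inner (nu_measure \<mu> a M k) q
      ([:- a k, 1:] * fourier_poly \<rho>' (muA \<mu> a {k}) (n - 1) (\<lambda>y. g y / (y - a k)))"
    unfolding \<rho>'_def r(1) by (rule poly_inner_nu_measure_muA_singleton[OF sets \<mu> M])
  finally show ?thesis
    unfolding \<rho>'_def .
qed

lemma fourier_poly_nu_measure_Suc:
  fixes \<mu> :: "real measure" and a M :: "nat \<Rightarrow> real" and k n :: nat
  assumes \<mu>: "op_measure \<mu>" and M: "\<And>i. i < Suc k \<Longrightarrow> M i \<ge> 0"
    and g: "g \<in> borel_measurable borel" "has_moments \<mu> g"
  defines "\<gamma> \<equiv> 1 / (1 + M k * opkernel (nu_measure \<mu> a M k) n (a k) (a k))"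
  shows "fourier_poly (nu_measure \<mu> a M (Suc k)) \<mu> n g =
    smult \<gamma> (fourier_poly (nu_measure \<mu> a M k) \<mu> n g) + smult (1 - \<gamma>)
      (if n = 0 then 0 else [:- a k, 1:] *
         fourier_poly (nu_measure (muA \<mu> a {k}) a (\<lambda>i. M i * (a i - a k)^2) k) (muA \<mu> a {k}) (n - 1)
            (\<lambda>y. g y / (y - a k)))"
proof (rule fourier_poly_add_point_mass[where \<rho>="nu_measure \<mu> a M k" and \<nu>="nu_measure \<mu> a M (Suc k)"
      and \<mu>=\<mu> and b="a k" and m="M k" and n=n, folded \<gamma>_def])
  note sets = op_measureD(1)[OF \<mu>] and moments = op_measureD(2)[OF \<mu>]
  have M_k: "\<And>i. i < k \<Longrightarrow> M i \<ge> 0"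
    using M by simp
  define F' where "F' = fourier_poly (nu_measure (muA \<mu> a {k}) a (\<lambda>i. M i * (a i - a k)^2) k)
    (muA \<mu> a {k}) (n - 1) (\<lambda>y. g y / (y - a k))"
  show "op_measure (nu_measure \<mu> a M k)" "op_measure (nu_measure \<mu> a M (Suc k))"
    using M M_k by (auto intro!: op_measure_nu_measure[OF sets] \<mu>)
  show "poly_inner (nu_measure \<mu> a M (Suc k)) p q =
      poly_inner (nu_measure \<mu> a M k) p q + M k * (poly p (a k) * poly q (a k))" for p q
    using poly_inner_nu_measure[OF sets M moments] poly_inner_nu_measure[OF sets M_k moments] by simp
  show "M k \<ge> 0" "has_moments \<mu> g"
    using M g by simp_all
  show "degree (if n = 0 then 0 else [:- a k, 1:] * F') \<le> n"
  proof (cases "n = 0")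
    case False
    have "op_measure (nu_measure (muA \<mu> a {k}) a (\<lambda>i. M i * (a i - a k)^2) k)"
      by (intro op_measure_nu_measure op_measure_muA_singleton[OF sets \<mu>]) (use M_k sets in auto)
    then have "degree F' \<le> n - 1"
      unfolding F'_def by (rule degree_fourier_poly)
    with False have "degree ([:- a k, 1:] * F') \<le> n"
      by (intro order.trans[OF degree_mult_le]) simp
    with False show ?thesis
      by simp
  qed simp
  show "poly (if n = 0 then 0 else [:- a k, 1:] * F') (a k) = 0"
    by simp
  fix q
  assume q: "degree q \<le> n" "poly q (a k) = 0"
  show "(\<integral>y. poly q y * g y \<partial>\<mu>) = poly_inner (nu_measure \<mu> a M k) q (if n = 0 then 0 else [:- a k, 1:] * F')"
  proof (cases "n = 0")
    case True
    with q have "degree q = 0"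
      by simp
    moreover from this have "coeff q 0 = 0"
      using q(2) by (simp add: poly_altdef)
    ultimately have "q = 0"
      by (metis leading_coeff_0_iff)
    then show ?thesis
      by (simp add: poly_inner_def)
  next
    case False
    then show ?thesis
      unfolding F'_def using integral_vanishing_poly_eq_poly_inner_nu_measure_muA[where a=a and k=k and M=M and n=n,
          OF \<mu> M_k g q]
      by simp
  qed
qed

lemma T_op_Suc:
  fixes \<mu> :: "real measure" and a M :: "nat \<Rightarrow> real" and k n :: nat
  assumes \<mu>: "op_measure \<mu>" and M: "\<And>i. i < Suc k \<Longrightarrow> M i \<ge> 0"
    and g: "g \<in> borel_measurable borel" "has_moments \<mu> g"
  defines "\<gamma> \<equiv> 1 / (1 + M k * opkernel (nu_measure \<mu> a M k) n (a k) (a k))"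
  shows "T_op \<mu> a M (Suc k) n g x = \<gamma> * T_op \<mu> a M k n g x + (1 - \<gamma>) *
      (if n = 0 then 0 else (x - a k) *
         T_op (muA \<mu> a {k}) a (\<lambda>i. M i * (a i - a k)^2) k (n - 1) (\<lambda>y. g y / (y - a k)) x)"
proof -
  have g': "has_moments (muA \<mu> a {k}) (\<lambda>y. g y / (y - a k))"
    by (rule has_moments_muA_singleton_div[OF op_measureD(1)[OF \<mu>] g])
  have "fourier_poly (nu_measure \<mu> a M (Suc k)) \<mu> n g =
    smult \<gamma> (fourier_poly (nu_measure \<mu> a M k) \<mu> n g) + smult (1 - \<gamma>)
      (if n = 0 then 0 else [:- a k, 1:] *
         fourier_poly (nu_measure (muA \<mu> a {k}) a (\<lambda>i. M i * (a i - a k)^2) k) (muA \<mu> a {k}) (n - 1)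
            (\<lambda>y. g y / (y - a k)))"
    unfolding \<gamma>_def by (rule fourier_poly_nu_measure_Suc[OF \<mu> M g])
  then show ?thesis
    unfolding T_op_def opkernel_integral(2)[OF g(2)] opkernel_integral(2)[OF g']
    by (simp add: left_diff_distrib)
qed

lemma one_div_one_add_mult_opkernel_bounds:
  assumes "op_measure \<rho>" "M \<ge> 0"
  shows "0 \<le> 1 / (1 + M * opkernel \<rho> n b b)" "1 / (1 + M * opkernel \<rho> n b b) \<le> 1"
proof -
  have "0 \<le> M * opkernel \<rho> n b b"
    using opkernel_diag_pos[OF assms(1), of n b] assms(2) by simp
  then show "0 \<le> 1 / (1 + M * opkernel \<rho> n b b)" "1 / (1 + M * opkernel \<rho> n b b) \<le> 1"
    by simp_all
qed

section \<open>\<open>L\<^sup>p\<close> estimates\<close>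

definition Lp_integral :: "real measure \<Rightarrow> real \<Rightarrow> (real \<Rightarrow> real) \<Rightarrow> ennreal" where
  "Lp_integral N p F = (\<integral>\<^sup>+ x. ennreal (\<bar>F x\<bar> powr p) \<partial>N)"

lemma Lp_norm_eq_Lp_integral:
  "Lp_norm N p F = (if Lp_integral N p F = \<infinity> then \<infinity> else ennreal (enn2real (Lp_integral N p F) powr (1 / p)))"
  unfolding Lp_norm_def Lp_integral_def Let_def by simp

lemma Lp_integral_finite_if_in_Lp: "in_Lp N p f \<Longrightarrow> Lp_integral N p f < \<infinity>"
  unfolding in_Lp_def Lp_integral_def by simp

lemma Lp_integral_le_if_Lp_norm_le:
  assumes le: "Lp_norm N p F \<le> ennreal C * Lp_norm N p f" and fin: "Lp_integral N p f < \<infinity>"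
    and p: "p > 0"
  shows "Lp_integral N p F \<le> ennreal (max C 0 powr p) * Lp_integral N p f"
proof -
  define C' where "C' = max C 0"
  have C': "C' \<ge> 0" "ennreal C = ennreal C'"
    unfolding C'_def by (auto simp: max_def ennreal_neg)
  obtain rf where rf: "Lp_integral N p f = ennreal rf" "rf \<ge> 0"
    using fin by (cases "Lp_integral N p f") auto
  have norm_f: "Lp_norm N p f = ennreal (rf powr (1/p))"
    using rf by (simp add: Lp_norm_eq_Lp_integral)
  have "Lp_integral N p F \<noteq> \<infinity>"
  proof
    assume "Lp_integral N p F = \<infinity>"
    then have "Lp_norm N p F = \<infinity>"
      by (simp add: Lp_norm_eq_Lp_integral)
    then show False
      using le C' unfolding norm_f by (simp add: ennreal_mult'[symmetric] top_unique)
  qed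
  then obtain rF where rF: "Lp_integral N p F = ennreal rF" "rF \<ge> 0"
    by (cases "Lp_integral N p F") auto
  have "ennreal (rF powr (1/p)) \<le> ennreal (C' * rf powr (1/p))"
    using le rF C' unfolding norm_f by (simp add: Lp_norm_eq_Lp_integral ennreal_mult'[symmetric])
  then have "rF powr (1/p) \<le> C' * rf powr (1/p)"
    using C' by (simp add: ennreal_le_iff)
  then have "(rF powr (1/p)) powr p \<le> (C' * rf powr (1/p)) powr p"
    using p by (intro powr_mono2) auto
  then have "rF \<le> C' powr p * rf"
    using rF rf C' p by (simp add: powr_powr powr_mult)
  then show ?thesis
    unfolding rF rf C'_def[symmetric] using rf C' by (simp add: ennreal_mult'[symmetric] ennreal_leI)
qed

lemma Lp_norm_le_if_Lp_integral_le:
  assumes le: "Lp_integral N p F \<le> ennreal c * Lp_integral N p f" and fin: "Lp_integral N p f < \<infinity>"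
    and p: "p > 0" and c: "c \<ge> 0"
  shows "Lp_norm N p F \<le> ennreal (c powr (1/p)) * Lp_norm N p f"
proof -
  obtain rf where rf: "Lp_integral N p f = ennreal rf" "rf \<ge> 0"
    using fin by (cases "Lp_integral N p f") auto
  have le': "Lp_integral N p F \<le> ennreal (c * rf)"
    using le rf c by (simp add: ennreal_mult')
  then obtain rF where rF: "Lp_integral N p F = ennreal rF" "rF \<ge> 0"
    by (cases "Lp_integral N p F") (auto simp: top_unique)
  with le' c rf have "rF powr (1/p) \<le> (c * rf) powr (1/p)"
    using p by (intro powr_mono2) (auto simp: ennreal_le_iff)
  then show ?thesis
    using rF rf c by (simp add: Lp_norm_eq_Lp_integral powr_mult ennreal_mult'[symmetric] ennreal_leI)
qed

lemma abs_convex_comb_powr_le: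
  fixes \<gamma> p w A B :: real
  assumes "0 \<le> \<gamma>" "\<gamma> \<le> 1" and p: "p > 0"
  shows "\<bar>w * (\<gamma> * A + (1 - \<gamma>) * B)\<bar> powr p \<le> \<bar>w * A\<bar> powr p + \<bar>w * B\<bar> powr p"
proof -
  define m where "m = max \<bar>w * A\<bar> \<bar>w * B\<bar>"
  have "\<bar>w * (\<gamma> * A + (1 - \<gamma>) * B)\<bar> = \<bar>\<gamma> * (w * A) + (1 - \<gamma>) * (w * B)\<bar>"
    by (simp add: algebra_simps)
  also have "\<dots> \<le> \<gamma> * \<bar>w * A\<bar> + (1 - \<gamma>) * \<bar>w * B\<bar>"
    using assms by (metis abs_mult abs_of_nonneg abs_triangle_ineq diff_ge_0_iff_ge)
  also have "\<dots> \<le> \<gamma> * m + (1 - \<gamma>) * m"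
    using assms by (intro add_mono mult_left_mono) (auto simp: m_def)
  finally have "\<bar>w * (\<gamma> * A + (1 - \<gamma>) * B)\<bar> powr p \<le> m powr p"
    using p by (intro powr_mono2) (auto simp: algebra_simps)
  also have "m powr p \<le> \<bar>w * A\<bar> powr p + \<bar>w * B\<bar> powr p"
    by (auto simp: m_def max_def)
  finally show ?thesis .
qed

text \<open>This is where the exponent \<open>1 - 2/p\<close> of the weights comes from.\<close>

lemma sq_mult_abs_wA_singleton_powr:
  assumes p: "p > 0"
  shows "(x - a k)^2 * \<bar>z * wA a {k} p x\<bar> powr p = \<bar>z * (x - a k)\<bar> powr p"
proof (cases "x = a k")
  case False
  define t where "t = \<bar>x - a k\<bar>"
  have t: "t > 0"
    using False by (simp add: t_def)
  have "(x - a k)^2 * \<bar>z * wA a {k} p x\<bar> powr p = t powr 2 * (\<bar>z\<bar> powr p * (t powr (1 - 2 / p)) powr p)"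
    using t by (simp add: t_def wA_singleton abs_mult powr_mult powr_numeral)
  also have "(t powr (1 - 2 / p)) powr p = t powr ((1 - 2 / p) * p)"
    by (rule powr_powr)
  also have "(1 - 2 / p) * p = p - 2"
    using p by (simp add: field_simps)
  also have "t powr (p - 2) = t powr p / t powr 2"
    by (rule powr_diff)
  also have "t powr 2 * (\<bar>z\<bar> powr p * (t powr p / t powr 2)) = \<bar>z * (x - a k)\<bar> powr p"
    using t by (simp add: t_def abs_mult powr_mult)
  finally show ?thesis .
qed (simp add: wA_singleton)

context
  fixes \<mu> :: "real measure" and a :: "nat \<Rightarrow> real" and k :: nat and p :: real
  assumes sets: "sets \<mu> = sets borel" and p: "p > 0"
begin

lemma Lp_integral_muA_singleton_mult_wA:
  assumes "F \<in> borel_measurable borel"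
  shows "Lp_integral (muA \<mu> a {k}) p (\<lambda>x. F x * wA a {k} p x) = Lp_integral \<mu> p (\<lambda>x. F x * (x - a k))"
proof -
  have "(\<lambda>x. \<bar>F x * wA a {k} p x\<bar> powr p) \<in> borel_measurable borel"
    unfolding wA_singleton using assms by measurable
  then show ?thesis
    unfolding Lp_integral_def
    by (simp add: nn_integral_muA_singleton[OF sets] sq_mult_abs_wA_singleton_powr[OF p])
qed

lemma Lp_integral_muA_singleton_div:
  assumes "f \<in> borel_measurable borel" and null: "emeasure \<mu> {a k} = 0"
  shows "Lp_integral (muA \<mu> a {k}) p (\<lambda>x. f x / (x - a k) * wA a {k} p x) = Lp_integral \<mu> p f"
proof -
  have "AE x in \<mu>. x \<noteq> a k"
    by (rule AE_I'[of "{a k}"]) (use null sets in \<open>auto simp: null_sets_def\<close>)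
  then have "AE x in \<mu>. ennreal (\<bar>f x / (x - a k) * (x - a k)\<bar> powr p) = ennreal (\<bar>f x\<bar> powr p)"
    by eventually_elim simp
  then have "Lp_integral \<mu> p (\<lambda>x. f x / (x - a k) * (x - a k)) = Lp_integral \<mu> p f"
    unfolding Lp_integral_def by (rule nn_integral_cong_AE)
  then show ?thesis
    using assms by (subst Lp_integral_muA_singleton_mult_wA) auto
qed

end

section \<open>Induction on the number of point masses\<close>

definition weighted_partial_sum_bound ::
    "real measure \<Rightarrow> (nat \<Rightarrow> real) \<Rightarrow> real \<Rightarrow> (real \<Rightarrow> real) \<Rightarrow> (real \<Rightarrow> real) \<Rightarrow> nat set \<Rightarrow> bool" where
  "weighted_partial_sum_bound \<mu> a p u v A \<longleftrightarrow> (\<exists>C::real. \<forall>n f. in_Lp (muA \<mu> a A) p f \<longrightarrow>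
       (\<forall>x. integrable (muA \<mu> a A)
              (\<lambda>y. opkernel (muA \<mu> a A) n x y * (f y / (v y * wA a A p y)))) \<and>
       Lp_norm (muA \<mu> a A) p
         (\<lambda>x. u x * wA a A p x * S_opA \<mu> a A n (\<lambda>y. f y / (v y * wA a A p y)) x)
       \<le> ennreal C * Lp_norm (muA \<mu> a A) p f)"

definition weighted_T_bound ::
    "real measure \<Rightarrow> (nat \<Rightarrow> real) \<Rightarrow> (nat \<Rightarrow> real) \<Rightarrow> nat \<Rightarrow> real \<Rightarrow> (real \<Rightarrow> real) \<Rightarrow> (real \<Rightarrow> real) \<Rightarrow> bool" where
  "weighted_T_bound \<mu> a M k p u v \<longleftrightarrow> (\<exists>C::real. \<forall>n f. in_Lp \<mu> p f \<longrightarrow>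
       (\<forall>x. integrable \<mu> (\<lambda>y. opkernel (nu_measure \<mu> a M k) n x y * (f y / v y))) \<and>
       Lp_norm \<mu> p (\<lambda>x. u x * T_op \<mu> a M k n (\<lambda>y. f y / v y) x)
       \<le> ennreal C * Lp_norm \<mu> p f)"

lemma weighted_T_bound_0:
  "sets \<mu> = sets borel \<Longrightarrow> weighted_partial_sum_bound \<mu> a p u v {} \<Longrightarrow> weighted_T_bound \<mu> a M 0 p u v"
  unfolding weighted_partial_sum_bound_def weighted_T_bound_def S_opA_def T_op_def
  by (simp add: nu_measure_0)

lemma has_moments_if_weighted_partial_sum_bound:
  assumes "op_measure \<mu>" "weighted_partial_sum_bound \<mu> a p u v {}" "in_Lp \<mu> p f"
  shows "has_moments \<mu> (\<lambda>y. f y / v y)"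
  using assms(2,3) unfolding weighted_partial_sum_bound_def
  by (intro has_moments_if_opkernel_integrable[OF assms(1)]) auto

lemma weighted_partial_sum_bound_muA_singleton:
  assumes "sets \<mu> = sets borel" "finite A" "k \<notin> A"
    and "weighted_partial_sum_bound \<mu> a p u v (insert k A)"
  shows "weighted_partial_sum_bound (muA \<mu> a {k}) a p (\<lambda>x. u x * wA a {k} p x) (\<lambda>x. v x * wA a {k} p x) A"
proof -
  have "u x * wA a {k} p x * wA a A p x = u x * wA a (insert k A) p x"
    "v x * wA a {k} p x * wA a A p x = v x * wA a (insert k A) p x" for u v :: "real \<Rightarrow> real" and x
    by (simp_all add: wA_insert[OF assms(2,3), symmetric] mult.assoc)
  then show ?thesis
    using assms(4) unfolding weighted_partial_sum_bound_def S_opA_def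
    by (simp only: muA_insert[OF assms(1-3)])
qed

lemma Lp_integral_bound_if_weighted_T_bound:
  assumes "weighted_T_bound \<mu> a M k p u v" "p > 0"
  obtains C where "C \<ge> 0" and "\<And>n f. in_Lp \<mu> p f \<Longrightarrow>
    Lp_integral \<mu> p (\<lambda>x. u x * T_op \<mu> a M k n (\<lambda>y. f y / v y) x) \<le> ennreal C * Lp_integral \<mu> p f"
proof -
  obtain C where C: "\<And>n f. in_Lp \<mu> p f \<Longrightarrow>
      Lp_norm \<mu> p (\<lambda>x. u x * T_op \<mu> a M k n (\<lambda>y. f y / v y) x) \<le> ennreal C * Lp_norm \<mu> p f"
    using assms(1) unfolding weighted_T_bound_def by blast
  show ?thesis
  proof (rule that)
    show "max C 0 powr p \<ge> 0"
      by simp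
    fix n f
    assume f: "in_Lp \<mu> p f"
    show "Lp_integral \<mu> p (\<lambda>x. u x * T_op \<mu> a M k n (\<lambda>y. f y / v y) x)
        \<le> ennreal (max C 0 powr p) * Lp_integral \<mu> p f"
      by (rule Lp_integral_le_if_Lp_norm_le[OF C[OF f] Lp_integral_finite_if_in_Lp[OF f] assms(2)])
  qed
qed

lemma borel_measurable_T_op:
  "has_moments \<mu> g \<Longrightarrow> T_op \<mu> a M k n g \<in> borel_measurable borel"
  unfolding T_op_def[abs_def] opkernel_integral(2)[where N="nu_measure \<mu> a M k"] by measurable

lemma Lp_integral_correction_term_le:
  fixes \<mu> :: "real measure" and M' :: "nat \<Rightarrow> real"
  assumes sets: "sets \<mu> = sets borel" and p: "p > 0" and null: "emeasure \<mu> {a k} = 0"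
    and u: "u \<in> borel_measurable borel" and v: "v \<in> borel_measurable borel"
    and f: "in_Lp \<mu> p f" and g: "has_moments \<mu> (\<lambda>y. f y / v y)"
    and bound: "\<And>n f'. in_Lp (muA \<mu> a {k}) p f' \<Longrightarrow>
      Lp_integral (muA \<mu> a {k}) p (\<lambda>x. u x * wA a {k} p x *
          T_op (muA \<mu> a {k}) a M' k' n (\<lambda>y. f' y / (v y * wA a {k} p y)) x)
        \<le> ennreal C * Lp_integral (muA \<mu> a {k}) p f'"
  shows "Lp_integral \<mu> p (\<lambda>x. u x * ((x - a k) *
      T_op (muA \<mu> a {k}) a M' k' n (\<lambda>y. f y / v y / (y - a k)) x)) \<le> ennreal C * Lp_integral \<mu> p f"
proof -
  define f' where "f' y = f y / (y - a k) * wA a {k} p y" for y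
  define T where "T = T_op (muA \<mu> a {k}) a M' k' n (\<lambda>y. f y / v y / (y - a k))"
  have f_meas: "f \<in> borel_measurable borel"
    using f unfolding in_Lp_def by (simp add: measurable_cong_sets[OF sets refl])
  then have "f' \<in> borel_measurable borel"
    unfolding f'_def wA_singleton by measurable
  moreover have f'_f: "Lp_integral (muA \<mu> a {k}) p f' = Lp_integral \<mu> p f"
    unfolding f'_def using Lp_integral_muA_singleton_div[OF sets p f_meas, where a=a and k=k] null by simp
  ultimately have f': "in_Lp (muA \<mu> a {k}) p f'"
    using f sets unfolding in_Lp_def Lp_integral_def
    by (simp add: measurable_cong_sets[of "muA \<mu> a {k}" borel, OF _ refl])
  have "(\<lambda>y. f' y / (v y * wA a {k} p y)) = (\<lambda>y. f y / v y / (y - a k))"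
  proof
    fix y
    show "f' y / (v y * wA a {k} p y) = f y / v y / (y - a k)"
    proof (cases "y = a k")
      case False
      then have "wA a {k} p y \<noteq> 0"
        by (simp add: wA_singleton)
      then show ?thesis
        by (simp add: f'_def)
    qed (simp add: f'_def)
  qed
  moreover have "(\<lambda>x. u x * wA a {k} p x * T x) = (\<lambda>x. (u x * T x) * wA a {k} p x)"
    by (simp add: fun_eq_iff mult_ac)
  ultimately have "Lp_integral (muA \<mu> a {k}) p (\<lambda>x. (u x * T x) * wA a {k} p x) \<le> ennreal C * Lp_integral \<mu> p f"
    using bound[OF f', of n] unfolding f'_f T_def by simp
  moreover have "T \<in> borel_measurable borel"
  proof -
    have "(\<lambda>y. f y / v y) \<in> borel_measurable borel"
      using f_meas v by measurable
    then show ?thesis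
      unfolding T_def by (intro borel_measurable_T_op has_moments_muA_singleton_div[OF sets _ g])
  qed
  moreover have "(\<lambda>x. u x * T x * (x - a k)) = (\<lambda>x. u x * ((x - a k) * T x))"
    by (simp add: fun_eq_iff mult_ac)
  ultimately show ?thesis
    using u by (simp add: Lp_integral_muA_singleton_mult_wA[OF sets p] T_def)
qed

lemma Lp_integral_T_op_Suc_le:
  fixes \<mu> :: "real measure" and a M :: "nat \<Rightarrow> real" and k n :: nat
  assumes \<mu>: "op_measure \<mu>" and M: "\<And>i. i < Suc k \<Longrightarrow> M i \<ge> 0" and p: "p > 0"
    and u: "u \<in> borel_measurable borel" and g: "g \<in> borel_measurable borel" "has_moments \<mu> g"
  shows "Lp_integral \<mu> p (\<lambda>x. u x * T_op \<mu> a M (Suc k) n g x) \<le>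
      Lp_integral \<mu> p (\<lambda>x. u x * T_op \<mu> a M k n g x) +
      Lp_integral \<mu> p (\<lambda>x. u x * ((x - a k) *
        T_op (muA \<mu> a {k}) a (\<lambda>i. M i * (a i - a k)^2) k (n - 1) (\<lambda>y. g y / (y - a k)) x))"
proof -
  note sets = op_measureD(1)[OF \<mu>]
  define T where "T = T_op \<mu> a M k n g"
  define T' where "T' = T_op (muA \<mu> a {k}) a (\<lambda>i. M i * (a i - a k)^2) k (n - 1) (\<lambda>y. g y / (y - a k))"
  define \<gamma> where "\<gamma> = 1 / (1 + M k * opkernel (nu_measure \<mu> a M k) n (a k) (a k))"
  have "op_measure (nu_measure \<mu> a M k)"
    using M by (intro op_measure_nu_measure[OF sets _ \<mu>]) simp
  then have \<gamma>: "0 \<le> \<gamma>" "\<gamma> \<le> 1"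
    unfolding \<gamma>_def using one_div_one_add_mult_opkernel_bounds[of _ "M k"] M[of k] by simp_all
  have decomposition:
    "T_op \<mu> a M (Suc k) n g x = \<gamma> * T x + (1 - \<gamma>) * (if n = 0 then 0 else (x - a k) * T' x)" for x
    unfolding T_def T'_def \<gamma>_def by (rule T_op_Suc[OF \<mu> M g])
  have "\<bar>u x * T_op \<mu> a M (Suc k) n g x\<bar> powr p \<le>
      \<bar>u x * T x\<bar> powr p + \<bar>u x * ((x - a k) * T' x)\<bar> powr p" for x
  proof -
    define B where "B = (if n = 0 then 0 else (x - a k) * T' x)"
    have "\<bar>u x * T_op \<mu> a M (Suc k) n g x\<bar> powr p \<le> \<bar>u x * T x\<bar> powr p + \<bar>u x * B\<bar> powr p"
      using decomposition[of x] abs_convex_comb_powr_le[OF \<gamma> p, of "u x" "T x" B]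
      unfolding B_def[symmetric] by simp
    also have "\<bar>u x * B\<bar> powr p \<le> \<bar>u x * ((x - a k) * T' x)\<bar> powr p"
      by (simp add: B_def)
    finally show ?thesis
      by simp
  qed
  then have "Lp_integral \<mu> p (\<lambda>x. u x * T_op \<mu> a M (Suc k) n g x) \<le>
      (\<integral>\<^sup>+ x. ennreal (\<bar>u x * T x\<bar> powr p) + ennreal (\<bar>u x * ((x - a k) * T' x)\<bar> powr p) \<partial>\<mu>)"
    unfolding Lp_integral_def by (intro nn_integral_mono) (simp flip: ennreal_plus)
  also have "\<dots> = Lp_integral \<mu> p (\<lambda>x. u x * T x) + Lp_integral \<mu> p (\<lambda>x. u x * ((x - a k) * T' x))"
  proof -
    have "T \<in> borel_measurable borel" "T' \<in> borel_measurable borel"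
      unfolding T_def T'_def
      by (intro borel_measurable_T_op g has_moments_muA_singleton_div[OF sets g])+
    then show ?thesis
      unfolding Lp_integral_def using u
      by (intro nn_integral_add) (auto simp: measurable_cong_sets[OF sets refl])
  qed
  finally show ?thesis
    unfolding T_def T'_def .
qed

lemma weighted_T_bound_Suc:
  fixes \<mu> :: "real measure" and a M :: "nat \<Rightarrow> real" and k :: nat
  assumes \<mu>: "op_measure \<mu>" and null: "emeasure \<mu> {a k} = 0"
    and M: "\<And>i. i < Suc k \<Longrightarrow> M i \<ge> 0" and p: "p > 0"
    and u: "u \<in> borel_measurable borel" and v: "v \<in> borel_measurable borel"
    and bound_0: "weighted_partial_sum_bound \<mu> a p u v {}"
    and IH: "weighted_T_bound \<mu> a M k p u v"
    and IH_muA: "weighted_T_bound (muA \<mu> a {k}) a (\<lambda>i. M i * (a i - a k)^2) k p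
                    (\<lambda>x. u x * wA a {k} p x) (\<lambda>x. v x * wA a {k} p x)"
  shows "weighted_T_bound \<mu> a M (Suc k) p u v"
proof -
  note sets = op_measureD(1)[OF \<mu>]
  obtain C1 where C1: "C1 \<ge> 0" "\<And>n f. in_Lp \<mu> p f \<Longrightarrow>
      Lp_integral \<mu> p (\<lambda>x. u x * T_op \<mu> a M k n (\<lambda>y. f y / v y) x) \<le> ennreal C1 * Lp_integral \<mu> p f"
    using Lp_integral_bound_if_weighted_T_bound[OF IH p] by blast
  obtain C2 where C2: "C2 \<ge> 0" "\<And>n f. in_Lp (muA \<mu> a {k}) p f \<Longrightarrow>
      Lp_integral (muA \<mu> a {k}) p (\<lambda>x. u x * wA a {k} p x *
          T_op (muA \<mu> a {k}) a (\<lambda>i. M i * (a i - a k)^2) k n (\<lambda>y. f y / (v y * wA a {k} p y)) x)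
        \<le> ennreal C2 * Lp_integral (muA \<mu> a {k}) p f"
    using Lp_integral_bound_if_weighted_T_bound[OF IH_muA p] by blast
  show ?thesis
    unfolding weighted_T_bound_def
  proof (intro exI[of _ "(C1 + C2) powr (1/p)"] allI impI conjI)
    fix n f
    assume f: "in_Lp \<mu> p f"
    have g: "(\<lambda>y. f y / v y) \<in> borel_measurable borel" "has_moments \<mu> (\<lambda>y. f y / v y)"
      using f v has_moments_if_weighted_partial_sum_bound[OF \<mu> bound_0 f]
      by (auto simp: in_Lp_def measurable_cong_sets[OF sets refl])
    show "integrable \<mu> (\<lambda>y. opkernel (nu_measure \<mu> a M (Suc k)) n x y * (f y / v y))" for x
      by (rule opkernel_integral(1)[OF g(2)])
    have "Lp_integral \<mu> p (\<lambda>x. u x * T_op \<mu> a M (Suc k) n (\<lambda>y. f y / v y) x) \<le>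
        Lp_integral \<mu> p (\<lambda>x. u x * T_op \<mu> a M k n (\<lambda>y. f y / v y) x) +
        Lp_integral \<mu> p (\<lambda>x. u x * ((x - a k) * T_op (muA \<mu> a {k}) a (\<lambda>i. M i * (a i - a k)^2) k (n - 1)
          (\<lambda>y. f y / v y / (y - a k)) x))"
      by (rule Lp_integral_T_op_Suc_le[OF \<mu> M p u g])
    also have "\<dots> \<le> ennreal C1 * Lp_integral \<mu> p f + ennreal C2 * Lp_integral \<mu> p f"
      by (intro add_mono C1(2)[OF f] Lp_integral_correction_term_le[OF sets p null u v f g(2) C2(2)])
    also have "\<dots> = ennreal (C1 + C2) * Lp_integral \<mu> p f"
      using C1(1) C2(1) by (simp add: ennreal_plus distrib_right)
    finally show "Lp_norm \<mu> p (\<lambda>x. u x * T_op \<mu> a M (Suc k) n (\<lambda>y. f y / v y) x) \<le>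
        ennreal ((C1 + C2) powr (1 / p)) * Lp_norm \<mu> p f"
      using C1(1) C2(1)
      by (intro Lp_norm_le_if_Lp_integral_le[OF _ Lp_integral_finite_if_in_Lp[OF f] p]) simp_all
  qed
qed

lemma weighted_T_bound_if_weighted_partial_sum_bounds:
  assumes "op_measure \<mu>" and "\<And>i. i < k \<Longrightarrow> emeasure \<mu> {a i} = 0" and "\<And>i. i < k \<Longrightarrow> M i \<ge> 0"
    and "p > 0" and "u \<in> borel_measurable borel" and "v \<in> borel_measurable borel"
    and "\<And>A. A \<subseteq> {..<k} \<Longrightarrow> weighted_partial_sum_bound \<mu> a p u v A"
  shows "weighted_T_bound \<mu> a M k p u v"
  using assms
proof (induct k arbitrary: \<mu> M u v)
  case 0
  then show ?case
    by (intro weighted_T_bound_0) (auto dest: op_measureD)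
next
  case (Suc k)
  note sets = op_measureD(1)[OF Suc.prems(1)]
  let ?w = "wA a {k} p"
  show ?case
  proof (rule weighted_T_bound_Suc[OF Suc.prems(1) _ Suc.prems(3,4,5,6)])
    show "emeasure \<mu> {a k} = 0" "weighted_partial_sum_bound \<mu> a p u v {}"
      using Suc.prems(2,7) by auto
    show "weighted_T_bound \<mu> a M k p u v"
    proof (rule Suc.hyps)
      show "weighted_partial_sum_bound \<mu> a p u v A" if "A \<subseteq> {..<k}" for A
        using that by (intro Suc.prems(7)) auto
    qed (use Suc.prems in auto)
    show "weighted_T_bound (muA \<mu> a {k}) a (\<lambda>i. M i * (a i - a k)^2) k p
        (\<lambda>x. u x * ?w x) (\<lambda>x. v x * ?w x)"
    proof (rule Suc.hyps)
      show "op_measure (muA \<mu> a {k})"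
        by (rule op_measure_muA_singleton[OF sets Suc.prems(1)])
      show "emeasure (muA \<mu> a {k}) {a i} = 0" if "i < k" for i
        using Suc.prems(2) that by (intro emeasure_muA_singleton_null[OF sets]) simp
      show "(\<lambda>x. u x * ?w x) \<in> borel_measurable borel" "(\<lambda>x. v x * ?w x) \<in> borel_measurable borel"
        unfolding wA_singleton using Suc.prems(5,6) by measurable
      show "weighted_partial_sum_bound (muA \<mu> a {k}) a p (\<lambda>x. u x * ?w x) (\<lambda>x. v x * ?w x) A"
        if "A \<subseteq> {..<k}" for A
      proof (rule weighted_partial_sum_bound_muA_singleton[OF sets])
        show "finite A" "k \<notin> A"
          using that finite_subset by auto
        show "weighted_partial_sum_bound \<mu> a p u v (insert k A)"
          using that by (intro Suc.prems(7)) auto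
      qed
    qed (use Suc.prems in auto)
  qed
qed

theorem lemma4:
  fixes \<mu> :: "real measure" and a M :: "nat \<Rightarrow> real" and k :: nat
    and p :: real and u v :: "real \<Rightarrow> real"
  assumes sets_mu: "sets \<mu> = sets borel"
    and incr: "infinite {x. point_of_increase \<mu> x}"
    and moments: "\<And>j. integrable \<mu> (\<lambda>x. x ^ j)"
    and distinct: "inj_on a {..<k}"
    and null: "\<And>i. i < k \<Longrightarrow> emeasure \<mu> {a i} = 0"
    and Mpos: "\<And>i. i < k \<Longrightarrow> M i > 0"
    and p: "1 < p"
    and u_meas: "u \<in> borel_measurable borel" and u_nonneg: "\<And>x. u x \<ge> 0"
    and v_meas: "v \<in> borel_measurable borel" and v_nonneg: "\<And>x. v x \<ge> 0"
    and hyp: "\<And>A. A \<subseteq> {..<k} \<Longrightarrow> \<exists>C::real. \<forall>n f. in_Lp (muA \<mu> a A) p f \<longrightarrow>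
       (\<forall>x. integrable (muA \<mu> a A)
              (\<lambda>y. opkernel (muA \<mu> a A) n x y * (f y / (v y * wA a A p y)))) \<and>
       Lp_norm (muA \<mu> a A) p
         (\<lambda>x. u x * wA a A p x * S_opA \<mu> a A n (\<lambda>y. f y / (v y * wA a A p y)) x)
       \<le> ennreal C * Lp_norm (muA \<mu> a A) p f"
  shows "\<exists>C::real. \<forall>n f. in_Lp \<mu> p f \<longrightarrow>
       (\<forall>x. integrable \<mu> (\<lambda>y. opkernel (nu_measure \<mu> a M k) n x y * (f y / v y))) \<and>
       Lp_norm \<mu> p (\<lambda>x. u x * T_op \<mu> a M k n (\<lambda>y. f y / v y) x)
       \<le> ennreal C * Lp_norm \<mu> p f"
proof -
  have "has_moments \<mu> (\<lambda>_. 1)"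
    using moments by (simp add: has_moments_def)
  then have "op_measure \<mu>"
    by (rule op_measure_if_infinite_points_of_increase[OF sets_mu _ incr])
  moreover have "M i \<ge> 0" if "i < k" for i
    using Mpos[OF that] by simp
  moreover have "weighted_partial_sum_bound \<mu> a p u v A" if "A \<subseteq> {..<k}" for A
    unfolding weighted_partial_sum_bound_def by (rule hyp[OF that])
  ultimately have "weighted_T_bound \<mu> a M k p u v"
    using null p u_meas v_meas by (intro weighted_T_bound_if_weighted_partial_sum_bounds) auto
  then show ?thesis
    unfolding weighted_T_bound_def .
qed

end
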